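(* Let $\mathcal X$ be finite, $P_0,P_1$ distributions on $\mathcal X$ with full support, and $0<\gamma<D(P_1\|P_0)$. Let $Q_\mu(x)=P_0^{\frac{\mu}{1+\mu}}(x)P_1^{\frac{1}{1+\mu}}(x)/\sum_aP_0^{\frac{\mu}{1+\mu}}(a)P_1^{\frac{1}{1+\mu}}(a)$ with $\mu\ge0$ solving $D(Q_\mu\|P_0)=\gamma$, and let $E_0=\gamma$, $E_1=D(Q_\mu\|P_1)$. For $r\ge0$ define $$\underline{\hat E}_0(r)=\min_{\substack{\hat Q:\,D(\hat Q\|P_0)\ge\gamma\\ Q:\,d(Q,\hat Q)\le r}}D(Q\|P_0),\qquad \underline{\hat E}_1(r)=\min_{\substack{\hat Q:\,D(\hat Q\|P_0)\le\gamma\\ Q:\,d(Q,\hat Q)\le r}}D(Q\|P_1).$$ Then for $i\in\{0,1\}$, as $r\to0$, $$\underline{\hat E}_i(r)=E_i-\sqrt{r\,\theta_i(P_0,P_1,\gamma)}+o(\sqrt r),$$ where $$\theta_0(P_0,P_1,\gamma)=\frac2\alpha\max_{\hat Q:\,D(\hat Q\|P_0)=\gamma}\mathrm{Var}_{\hat Q}\Big(\log\frac{\hat Q(X)}{P_0(X)}\Big),\qquad \theta_1(P_0,P_1,\gamma)=\frac2\alpha\mathrm{Var}_{Q_\mu}\Big(\log\frac{Q_\mu(X)}{P_1(X)}\Big).$$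
   Context: $D$ is relative entropy. Setting: Hoeffding's test with known $P_0$ and threshold $\gamma$ (decide 1 iff $D(\hat T\|P_0)\ge\gamma$) is applied to a tampered observation whose type $\hat Q$ is within distance $r$ of the true type $Q$; $\underline{\hat E}_i(r)$ are the worst-case exponents. The distance $d$ is either the Rényi divergence $d(Q,\hat Q)=D_\alpha(Q\|\hat Q)=\frac{1}{\alpha-1}\log\sum_xQ(x)^\alpha\hat Q(x)^{1-\alpha}$ of order $\alpha>0$ ($\alpha=1$: relative entropy), or an $f$-divergence $d(Q,\hat Q)=\sum_x\hat Q(x)f(Q(x)/\hat Q(x))$ with $f$ convex, twice differentiable, and $\alpha:=f''(1)$. *)

theory Defs
  imports "HOL-Analysis.Analysis" "HOL-Library.Landau_Symbols"
begin

definition distrs :: "('a::finite \<Rightarrow> real) set" where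
  "distrs = {Q. (\<forall>x. 0 \<le> Q x) \<and> (\<Sum>x\<in>UNIV. Q x) = 1}"

text \<open>Relative entropy D(Q||P) (natural log, 0 log 0 = 0); used with P of full support.\<close>
definition kl :: "('a::finite \<Rightarrow> real) \<Rightarrow> ('a \<Rightarrow> real) \<Rightarrow> real" where
  "kl Q P = (\<Sum>x\<in>UNIV. if Q x = 0 then 0 else Q x * ln (Q x / P x))"

definition kl_ext :: "('a::finite \<Rightarrow> real) \<Rightarrow> ('a \<Rightarrow> real) \<Rightarrow> ereal" where
  "kl_ext Q P = (if \<exists>x. 0 < Q x \<and> P x = 0 then \<infinity> else ereal (kl Q P))"

definition renyi_div :: "real \<Rightarrow> ('a::finite \<Rightarrow> real) \<Rightarrow> ('a \<Rightarrow> real) \<Rightarrow> ereal" where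
  "renyi_div \<alpha> Q Qh =
    (if \<alpha> = 1 then kl_ext Q Qh
     else if 1 < \<alpha> \<and> (\<exists>x. 0 < Q x \<and> Qh x = 0) then \<infinity>
     else (let s = (\<Sum>x\<in>{x. 0 < Q x \<and> 0 < Qh x}. Q x powr \<alpha> * Qh x powr (1 - \<alpha>))
           in if s = 0 then \<infinity> else ereal (ln s / (\<alpha> - 1))))"

text \<open>f-divergence sum_x Qh(x) f(Q(x)/Qh(x)) with f defined on (0,inf) and the standard
  conventions: a zero Q(x) uses f(0+) = lim_{t->0+} f t, a zero Qh(x) uses
  Q(x) * lim_{t->inf} f(t)/t, and 0 f(0/0) = 0.\<close>
definition f_zero :: "(real \<Rightarrow> real) \<Rightarrow> ereal" where
  "f_zero f = Lim (at_right 0) (\<lambda>t. ereal (f t))"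

definition f_slope_inf :: "(real \<Rightarrow> real) \<Rightarrow> ereal" where
  "f_slope_inf f = Lim at_top (\<lambda>t. ereal (f t / t))"

definition fdiv :: "(real \<Rightarrow> real) \<Rightarrow> ('a::finite \<Rightarrow> real) \<Rightarrow> ('a \<Rightarrow> real) \<Rightarrow> ereal" where
  "fdiv f Q Qh = (\<Sum>x\<in>UNIV.
      if 0 < Qh x then (if 0 < Q x then ereal (Qh x * f (Q x / Qh x)) else ereal (Qh x) * f_zero f)
      else if Q x = 0 then 0 else ereal (Q x) * f_slope_inf f)"

text \<open>Admissible f-divergence generator: convex, twice differentiable on (0,inf), f(1)=0,
  with second derivative f'' (so alpha = f''(1)).\<close>
definition fgen :: "(real \<Rightarrow> real) \<Rightarrow> (real \<Rightarrow> real) \<Rightarrow> (real \<Rightarrow> real) \<Rightarrow> bool" where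
  "fgen f f' f'' \<longleftrightarrow> convex_on {0<..} f \<and> f 1 = 0 \<and>
     (\<forall>t>0. (f has_real_derivative f' t) (at t) \<and> (f' has_real_derivative f'' t) (at t))"

definition tilt :: "('a::finite \<Rightarrow> real) \<Rightarrow> ('a \<Rightarrow> real) \<Rightarrow> real \<Rightarrow> 'a \<Rightarrow> real" where
  "tilt P0 P1 \<mu> x =
     P0 x powr (\<mu> / (1 + \<mu>)) * P1 x powr (1 / (1 + \<mu>)) /
     (\<Sum>a\<in>UNIV. P0 a powr (\<mu> / (1 + \<mu>)) * P1 a powr (1 / (1 + \<mu>)))"

definition var_log :: "('a::finite \<Rightarrow> real) \<Rightarrow> ('a \<Rightarrow> real) \<Rightarrow> real" where
  "var_log Q P = (\<Sum>x\<in>UNIV. Q x * (ln (Q x / P x))\<^sup>2) - (\<Sum>x\<in>UNIV. Q x * ln (Q x / P x))\<^sup>2"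

definition E0_hat :: "('a::finite \<Rightarrow> real) \<Rightarrow> real \<Rightarrow> (('a \<Rightarrow> real) \<Rightarrow> ('a \<Rightarrow> real) \<Rightarrow> ereal) \<Rightarrow> real \<Rightarrow> real" where
  "E0_hat P0 \<gamma> d r = Inf {kl Q P0 | Q Qh. Qh \<in> distrs \<and> Q \<in> distrs \<and> \<gamma> \<le> kl Qh P0 \<and> d Q Qh \<le> ereal r}"

definition E1_hat :: "('a::finite \<Rightarrow> real) \<Rightarrow> ('a \<Rightarrow> real) \<Rightarrow> real \<Rightarrow> (('a \<Rightarrow> real) \<Rightarrow> ('a \<Rightarrow> real) \<Rightarrow> ereal) \<Rightarrow> real \<Rightarrow> real" where
  "E1_hat P0 P1 \<gamma> d r = Inf {kl Q P1 | Q Qh. Qh \<in> distrs \<and> Q \<in> distrs \<and> kl Qh P0 \<le> \<gamma> \<and> d Q Qh \<le> ereal r}"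

definition theta0 :: "real \<Rightarrow> ('a::finite \<Rightarrow> real) \<Rightarrow> real \<Rightarrow> real" where
  "theta0 \<alpha> P0 \<gamma> = 2 / \<alpha> * Sup {var_log Qh P0 | Qh. Qh \<in> distrs \<and> kl Qh P0 = \<gamma>}"

definition theta1 :: "real \<Rightarrow> ('a::finite \<Rightarrow> real) \<Rightarrow> ('a \<Rightarrow> real) \<Rightarrow> real \<Rightarrow> real" where
  "theta1 \<alpha> P0 P1 \<mu> = 2 / \<alpha> * var_log (tilt P0 P1 \<mu>) P1"

end

theory Submission
  imports Defs "HOL-Real_Asymp.Real_Asymp"
begin

lemma distrsD:
  assumes "Q \<in> distrs"
  shows "0 \<le> Q x" "(\<Sum>x\<in>UNIV. Q x) = 1" "Q x \<le> 1"
proof -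
  show "0 \<le> Q x" "(\<Sum>x\<in>UNIV. Q x) = 1" using assms by (auto simp: distrs_def)
  have "Q x \<le> (\<Sum>y\<in>UNIV. Q y)"
    using assms by (intro member_le_sum) (auto simp: distrs_def)
  then show "Q x \<le> 1" using assms by (simp add: distrs_def)
qed

lemma finite_fun_bounded:
  fixes f :: "'a::finite \<Rightarrow> real"
  obtains B where "\<And>x. \<bar>f x\<bar> \<le> B"
  using member_le_sum[of _ UNIV "\<lambda>x. \<bar>f x\<bar>"] by auto

lemma sum_UNIV_split:
  fixes f :: "'a::finite \<Rightarrow> 'b::comm_monoid_add"
  shows "(\<Sum>x\<in>UNIV. f x) = (\<Sum>x\<in>A. f x) + (\<Sum>x\<in>- A. f x)"
  using sum.Int_Diff[of UNIV f A] by (simp add: Compl_eq_Diff_UNIV)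

lemma kl_eq_sum: "kl Q P = (\<Sum>x\<in>UNIV. Q x * ln (Q x / P x))"
  unfolding kl_def by (intro sum.cong) auto

lemma sum_diff_distrs_eq_0: "q \<in> distrs \<Longrightarrow> w \<in> distrs \<Longrightarrow> (\<Sum>x\<in>UNIV. q x - w x) = 0"
  by (simp add: sum_subtractf distrsD)

lemma mult_ln_div_eq: "0 \<le> u \<Longrightarrow> 0 < p \<Longrightarrow> u * ln (u / p) = u * ln u - u * ln (p::real)"
  by (cases "u = 0") (auto simp: ln_div algebra_simps)

lemma diff_le_mult_ln_div:
  fixes u z :: real
  assumes "0 \<le> u" "0 < z"
  shows "u - z \<le> u * ln (u / z)"
proof (cases "u = 0")
  case False
  with assms have "ln (z / u) \<le> z / u - 1" by (intro ln_le_minus_one) auto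
  then have "u * (1 - z / u) \<le> u * ln (u / z)"
    using assms False by (intro mult_left_mono) (auto simp: ln_div)
  moreover have "u * (1 - z / u) = u - z" using False by (simp add: field_simps)
  ultimately show ?thesis by simp
qed (use assms in simp)

text \<open>The convex function \<open>u \<mapsto> u ln (u/p)\<close> lies above its tangent at \<open>z\<close>.\<close>
lemma mult_ln_div_ge_tangent:
  fixes u z p :: real
  assumes "0 \<le> u" "0 < z" "0 < p"
  shows "u * ln (z / p) + u - z \<le> u * ln (u / p)"
proof (cases "u = 0")
  case False
  with assms have "u * ln (u / p) = u * ln (u / z) + u * ln (z / p)"
    by (simp add: ln_div algebra_simps)
  then show ?thesis using diff_le_mult_ln_div[of u z] assms by linarith
qed (use assms in simp)

lemma kl_nonneg:
  assumes "Q \<in> distrs" "P \<in> distrs" "\<And>x. 0 < P x"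
  shows "0 \<le> kl Q P"
proof -
  have "(\<Sum>x\<in>UNIV. Q x - P x) \<le> (\<Sum>x\<in>UNIV. Q x * ln (Q x / P x))"
    using assms by (intro sum_mono diff_le_mult_ln_div) (auto simp: distrsD)
  then show ?thesis using sum_diff_distrs_eq_0[OF assms(1,2)] by (simp add: kl_eq_sum)
qed

lemma kl_self: "(\<And>x. 0 < P x) \<Longrightarrow> kl P P = 0"
  by (simp add: kl_eq_sum less_imp_neq[symmetric])

lemma kl_le_of_abs_ln_le:
  assumes "Q \<in> distrs" "\<And>x. 0 < P x" "\<And>x. \<bar>ln (P x)\<bar> \<le> L"
  shows "kl Q P \<le> L"
proof -
  have "Q x * ln (Q x / P x) \<le> Q x * L" for x
  proof (cases "Q x = 0")
    case False
    with assms have "0 < Q x" "Q x \<le> 1" by (auto simp: distrsD less_le)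
    with assms(2)[of x] have "ln (Q x / P x) = ln (Q x) - ln (P x)" "ln (Q x) \<le> 0"
      by (auto simp: ln_div)
    then have "ln (Q x / P x) \<le> L" using assms(3)[of x] by linarith
    then show ?thesis using \<open>0 < Q x\<close> by (intro mult_left_mono) auto
  qed simp
  then have "kl Q P \<le> (\<Sum>x\<in>UNIV. Q x * L)" unfolding kl_eq_sum by (intro sum_mono)
  also have "\<dots> = L" using assms(1) by (simp add: sum_distrib_right[symmetric] distrsD)
  finally show ?thesis .
qed

lemma ln_ge_neg_powr:
  fixes u k :: real
  assumes "0 < u" "0 < k"
  shows "- (u powr (- k)) / k \<le> ln u"
proof -
  have "ln (1 / u powr k) \<le> 1 / u powr k - 1" using assms by (intro ln_le_minus_one) auto
  then have "- (u powr (- k)) \<le> k * ln u" using assms by (simp add: ln_div powr_minus_divide)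
  then show ?thesis using assms by (simp add: field_simps)
qed

lemma mult_ln_ge_neg_powr: "0 \<le> (u::real) \<Longrightarrow> - 4 * u powr (3/4) \<le> u * ln u"
proof (cases "u = 0")
  case False
  assume "0 \<le> u"
  with False have u: "0 < u" by simp
  have "u * (- 4 * u powr (-(1/4))) \<le> u * ln u"
    using ln_ge_neg_powr[OF u, of "1/4"] u by (intro mult_left_mono) auto
  moreover have "u * u powr (-(1/4)) = u powr (3/4)"
    using u powr_add[of u 1 "-(1/4)"] by simp
  ultimately show ?thesis by simp
qed simp

lemma mult_ln_sq_le: "0 \<le> (u::real) \<Longrightarrow> u \<le> 1 \<Longrightarrow> u * (ln u)\<^sup>2 \<le> 4"
proof (cases "u = 0")
  case False
  assume "0 \<le> u" "u \<le> 1"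
  with False have u: "0 < u" "u \<le> 1" by auto
  have "- ln u \<le> 2 * u powr (-(1/2))" using ln_ge_neg_powr[OF u(1), of "1/2"] by simp
  then have "(- ln u)\<^sup>2 \<le> (2 * u powr (-(1/2)))\<^sup>2" using u by (intro power_mono) auto
  then have "(ln u)\<^sup>2 \<le> (2 * u powr (-(1/2)))\<^sup>2" by simp
  also have "\<dots> = 4 / u" using u by (simp add: powr_minus_divide powr_half_sqrt power_divide)
  finally show ?thesis using u by (simp add: field_simps)
qed simp

lemma var_log_eq_centered:
  assumes "w \<in> distrs"
  shows "var_log w P = (\<Sum>x\<in>UNIV. w x * (ln (w x / P x) - kl w P)\<^sup>2)"
proof -
  let ?L = "\<lambda>x. ln (w x / P x)" and ?k = "kl w P"
  have "(\<Sum>x\<in>UNIV. w x * (?L x - ?k)\<^sup>2) =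
        (\<Sum>x\<in>UNIV. w x * (?L x)\<^sup>2) - 2 * ?k * (\<Sum>x\<in>UNIV. w x * ?L x) + ?k\<^sup>2 * (\<Sum>x\<in>UNIV. w x)"
    by (simp add: power2_diff algebra_simps sum.distrib sum_subtractf sum_distrib_left sum_distrib_right)
  also have "(\<Sum>x\<in>UNIV. w x * ?L x) = ?k" by (simp add: kl_eq_sum)
  finally show ?thesis using assms unfolding var_log_def by (simp add: distrsD kl_eq_sum power2_eq_square)
qed

lemma var_log_nonneg: "w \<in> distrs \<Longrightarrow> 0 \<le> var_log w P"
  by (simp add: var_log_eq_centered distrsD sum_nonneg)

lemma var_log_le:
  fixes w P :: "'a::finite \<Rightarrow> real" and L :: real
  assumes w: "w \<in> distrs" and P: "\<And>x. 0 < P x" "\<And>x. \<bar>ln (P x)\<bar> \<le> L"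
  shows "var_log w P \<le> CARD('a) * (8 + 2 * L\<^sup>2)"
proof -
  have "w x * (ln (w x / P x))\<^sup>2 \<le> 8 + 2 * L\<^sup>2" for x
  proof (cases "w x = 0")
    case False
    with w have wx: "0 < w x" "w x \<le> 1" by (auto simp: distrsD less_le)
    have "(ln (w x / P x))\<^sup>2 = (ln (w x) - ln (P x))\<^sup>2" using wx P(1)[of x] by (simp add: ln_div)
    also have "\<dots> \<le> 2 * (ln (w x))\<^sup>2 + 2 * (ln (P x))\<^sup>2"
      using zero_le_power2[of "ln (w x) + ln (P x)"] by (simp add: power2_diff power2_sum)
    finally have "w x * (ln (w x / P x))\<^sup>2 \<le> w x * (2 * (ln (w x))\<^sup>2 + 2 * (ln (P x))\<^sup>2)"
      using wx by (intro mult_left_mono) auto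
    then have "w x * (ln (w x / P x))\<^sup>2 \<le> 2 * (w x * (ln (w x))\<^sup>2) + 2 * (w x * (ln (P x))\<^sup>2)"
      by (simp add: algebra_simps)
    moreover have "w x * (ln (w x))\<^sup>2 \<le> 4" using wx by (intro mult_ln_sq_le) auto
    moreover have "w x * (ln (P x))\<^sup>2 \<le> 1 * L\<^sup>2"
      using wx P(2)[of x] abs_le_square_iff[of "ln (P x)" L] abs_le_D2[OF P(2)[of x]]
      by (intro mult_mono) (auto simp: abs_le_square_iff)
    ultimately show ?thesis by linarith
  qed simp
  then have "(\<Sum>x\<in>UNIV. w x * (ln (w x / P x))\<^sup>2) \<le> CARD('a) * (8 + 2 * L\<^sup>2)"
    using sum_mono[of UNIV "\<lambda>x. w x * (ln (w x / P x))\<^sup>2" "\<lambda>_. 8 + 2 * L\<^sup>2"] by simp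
  then show ?thesis unfolding var_log_def by (smt (verit) zero_le_power2)
qed

lemma sum_sq_diff_le_kl:
  assumes w: "w \<in> distrs" and v: "v \<in> distrs" "\<And>x. 0 < v x"
  shows "(\<Sum>x\<in>UNIV. (w x - v x)\<^sup>2) \<le> 4 * kl w v"
proof -
  have hellinger: "2 * w x - 2 * sqrt (w x * v x) \<le> w x * ln (w x / v x)" for x
  proof (cases "w x = 0")
    case False
    with w v have wx: "0 < w x" and vx: "0 < v x" by (auto simp: distrsD less_le)
    define s where "s = sqrt (v x / w x)"
    have "0 < s" using wx vx by (simp add: s_def)
    then have "2 - 2 * s \<le> - 2 * ln s" using ln_le_minus_one[of s] by linarith
    also have "- 2 * ln s = ln (w x / v x)" using wx vx by (simp add: s_def ln_sqrt ln_div)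
    finally have "w x * (2 - 2 * s) \<le> w x * ln (w x / v x)" using wx by (intro mult_left_mono) auto
    moreover have "w x * s = sqrt (w x * v x)"
    proof -
      have "sqrt ((w x)\<^sup>2 * (v x / w x)) = w x * s" unfolding real_sqrt_mult s_def using wx by simp
      then have "w x * s = sqrt ((w x)\<^sup>2 * (v x / w x))" ..
      also have "(w x)\<^sup>2 * (v x / w x) = w x * v x" using wx by (simp add: power2_eq_square)
      finally show ?thesis .
    qed
    ultimately show ?thesis by (simp add: algebra_simps)
  qed simp
  have "(w x - v x)\<^sup>2 \<le> 4 * (2 * w x - 2 * sqrt (w x * v x)) + 4 * (v x - w x)" for x
  proof -
    have w0: "0 \<le> w x" "w x \<le> 1" and v0: "0 \<le> v x" "v x \<le> 1" using w v by (auto simp: distrsD)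
    have "(w x - v x)\<^sup>2 = (sqrt (w x) - sqrt (v x))\<^sup>2 * (sqrt (w x) + sqrt (v x))\<^sup>2"
      using w0 v0 by (simp add: power_mult_distrib[symmetric] algebra_simps)
    also have "\<dots> \<le> (sqrt (w x) - sqrt (v x))\<^sup>2 * 2\<^sup>2"
    proof -
      have "sqrt (w x) + sqrt (v x) \<le> 1 + 1" using w0 v0 by (intro add_mono) auto
      then show ?thesis using w0 v0 by (intro mult_left_mono power_mono) auto
    qed
    also have "(sqrt (w x) - sqrt (v x))\<^sup>2 = w x + v x - 2 * sqrt (w x * v x)"
      using w0 v0 by (simp add: power2_diff real_sqrt_mult)
    finally show ?thesis by simp
  qed
  then have "(\<Sum>x\<in>UNIV. (w x - v x)\<^sup>2) \<le> (\<Sum>x\<in>UNIV. 4 * (2 * w x - 2 * sqrt (w x * v x)) - 4 * (w x - v x))"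
    by (intro sum_mono) simp
  also have "\<dots> = 4 * (\<Sum>x\<in>UNIV. 2 * w x - 2 * sqrt (w x * v x)) - 4 * (\<Sum>x\<in>UNIV. w x - v x)"
    by (simp only: sum_distrib_left sum_subtractf[symmetric])
  also have "\<dots> = 4 * (\<Sum>x\<in>UNIV. 2 * w x - 2 * sqrt (w x * v x))"
    using sum_diff_distrs_eq_0[OF w v(1)] by simp
  also have "\<dots> \<le> 4 * kl w v" unfolding kl_eq_sum using hellinger by (intro mult_left_mono sum_mono) auto
  finally show ?thesis .
qed

definition near_set :: "real \<Rightarrow> ('a \<Rightarrow> real) \<Rightarrow> ('a \<Rightarrow> real) \<Rightarrow> 'a set" where
  "near_set \<kappa> q w = {x. 0 < w x \<and> \<bar>q x - w x\<bar> \<le> \<kappa> * w x}"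

text \<open>Terms with \<open>w x = 0\<close> contribute \<open>0\<close> (division by zero); \<open>chi2 q w\<close> is only used for \<open>q\<close>
  absolutely continuous with respect to \<open>w\<close>.\<close>
definition chi2 :: "('a::finite \<Rightarrow> real) \<Rightarrow> ('a \<Rightarrow> real) \<Rightarrow> real" where
  "chi2 q w = (\<Sum>x\<in>UNIV. (q x - w x)\<^sup>2 / w x)"

lemma kl_diff_near_ge:
  fixes P w q :: "'a::finite \<Rightarrow> real"
  assumes w: "w \<in> distrs" and P: "\<And>x. 0 < P x"
    and pos: "\<And>x. x \<in> N \<Longrightarrow> 0 < w x \<and> 0 < q x"
    and chi: "(\<Sum>x\<in>N. (q x - w x)\<^sup>2 / w x) \<le> X"
  shows "(kl w P + 1) * (\<Sum>x\<in>N. q x - w x) - sqrt (X * var_log w P)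
           \<le> (\<Sum>x\<in>N. q x * ln (q x / P x) - w x * ln (w x / P x))"
proof -
  define c where "c x = ln (w x / P x) - kl w P" for x
  have "(\<Sum>x\<in>N. (c x + kl w P + 1) * (q x - w x)) \<le> (\<Sum>x\<in>N. q x * ln (q x / P x) - w x * ln (w x / P x))"
  proof (intro sum_mono)
    fix x assume "x \<in> N"
    then show "(c x + kl w P + 1) * (q x - w x) \<le> q x * ln (q x / P x) - w x * ln (w x / P x)"
      using mult_ln_div_ge_tangent[of "q x" "w x" "P x"] pos[of x] P[of x] by (simp add: c_def algebra_simps)
  qed
  moreover have "(\<Sum>x\<in>N. (c x + kl w P + 1) * (q x - w x))
      = (\<Sum>x\<in>N. c x * (q x - w x) + (kl w P + 1) * (q x - w x))"
    by (intro sum.cong) (simp_all add: algebra_simps)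
  then have "(\<Sum>x\<in>N. (c x + kl w P + 1) * (q x - w x))
      = (\<Sum>x\<in>N. c x * (q x - w x)) + (kl w P + 1) * (\<Sum>x\<in>N. q x - w x)"
    by (simp only: sum.distrib sum_distrib_left)
  moreover have "\<bar>\<Sum>x\<in>N. c x * (q x - w x)\<bar> \<le> sqrt (X * var_log w P)"
  proof -
    have "(\<Sum>x\<in>N. c x * (q x - w x)) = (\<Sum>x\<in>N. (sqrt (w x) * c x) * ((q x - w x) / sqrt (w x)))"
      using pos by (intro sum.cong) (auto simp: less_imp_neq[symmetric])
    then have "\<bar>\<Sum>x\<in>N. c x * (q x - w x)\<bar> \<le> (\<Sum>x\<in>N. \<bar>(sqrt (w x) * c x) * ((q x - w x) / sqrt (w x))\<bar>)"
      by (simp only: sum_abs)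
    also have "\<dots> = (\<Sum>x\<in>N. \<bar>sqrt (w x) * c x\<bar> * \<bar>(q x - w x) / sqrt (w x)\<bar>)"
      by (simp only: abs_mult)
    also have "\<dots> \<le> L2_set (\<lambda>x. sqrt (w x) * c x) N * L2_set (\<lambda>x. (q x - w x) / sqrt (w x)) N"
      by (rule L2_set_mult_ineq)
    also have "\<dots> \<le> sqrt (var_log w P) * sqrt X"
    proof (intro mult_mono)
      show "L2_set (\<lambda>x. sqrt (w x) * c x) N \<le> sqrt (var_log w P)"
      proof -
        have "(\<Sum>x\<in>N. (sqrt (w x) * c x)\<^sup>2) = (\<Sum>x\<in>N. w x * (c x)\<^sup>2)"
          using pos by (intro sum.cong) (auto simp: power_mult_distrib less_imp_le)
        also have "\<dots> \<le> (\<Sum>x\<in>UNIV. w x * (c x)\<^sup>2)"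
          using w by (intro sum_mono2) (auto simp: distrsD)
        finally show ?thesis by (simp add: L2_set_def c_def var_log_eq_centered[OF w])
      qed
      show "L2_set (\<lambda>x. (q x - w x) / sqrt (w x)) N \<le> sqrt X"
      proof -
        have "(\<Sum>x\<in>N. ((q x - w x) / sqrt (w x))\<^sup>2) = (\<Sum>x\<in>N. (q x - w x)\<^sup>2 / w x)"
          using pos by (intro sum.cong) (auto simp: power_divide less_imp_le)
        then show ?thesis using chi by (simp add: L2_set_def)
      qed
    qed (use var_log_nonneg[OF w] in auto)
    finally show ?thesis by (simp add: real_sqrt_mult mult.commute)
  qed
  ultimately show ?thesis by linarith
qed

lemma kl_diff_far_ge:
  fixes P w q :: "'a::finite \<Rightarrow> real" and L :: real
  assumes q: "q \<in> distrs" and w: "w \<in> distrs"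
    and P: "\<And>x. 0 < P x" "\<And>x. \<bar>ln (P x)\<bar> \<le> L" and "0 < \<kappa>"
    and far: "\<And>x. x \<in> F \<Longrightarrow> \<kappa> * w x \<le> \<bar>q x - w x\<bar>"
    and tv: "(\<Sum>x\<in>F. \<bar>q x - w x\<bar>) \<le> T"
  shows "- L * T - 4 * CARD('a) * ((1 + 1 / \<kappa>) * T) powr (3/4)
           \<le> (\<Sum>x\<in>F. q x * ln (q x / P x) - w x * ln (w x / P x))"
proof -
  have L: "0 \<le> L" using P(2) abs_ge_zero order_trans by blast
  have "- 4 * ((1 + 1 / \<kappa>) * T) powr (3/4) - \<bar>q x - w x\<bar> * L
      \<le> q x * ln (q x / P x) - w x * ln (w x / P x)" if "x \<in> F" for x
  proof -
    have q0: "0 \<le> q x" and w0: "0 \<le> w x" "w x \<le> 1" using q w by (auto simp: distrsD)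
    have "w x \<le> \<bar>q x - w x\<bar> / \<kappa>" using far[OF that] \<open>0 < \<kappa>\<close> by (simp add: field_simps)
    then have "q x \<le> (1 + 1 / \<kappa>) * \<bar>q x - w x\<bar>" by (simp add: algebra_simps)
    also have "\<dots> \<le> (1 + 1 / \<kappa>) * T"
      using tv member_le_sum[OF that, of "\<lambda>x. \<bar>q x - w x\<bar>"] \<open>0 < \<kappa>\<close>
      by (intro mult_left_mono) auto
    finally have "q x powr (3/4) \<le> ((1 + 1 / \<kappa>) * T) powr (3/4)"
      using q0 by (intro powr_mono2) auto
    moreover have "- 4 * q x powr (3/4) \<le> q x * ln (q x)" using q0 by (rule mult_ln_ge_neg_powr)
    moreover have "w x * ln (w x) \<le> 0" using w0 by (cases "w x = 0") (auto intro: mult_nonneg_nonpos)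
    moreover have "(q x - w x) * ln (P x) \<le> \<bar>q x - w x\<bar> * L"
    proof -
      have "(q x - w x) * ln (P x) \<le> \<bar>q x - w x\<bar> * \<bar>ln (P x)\<bar>" by (simp flip: abs_mult)
      also have "\<dots> \<le> \<bar>q x - w x\<bar> * L" using P(2) by (rule mult_left_mono) simp
      finally show ?thesis .
    qed
    moreover have "q x * ln (q x / P x) - w x * ln (w x / P x) = q x * ln (q x) - w x * ln (w x) - (q x - w x) * ln (P x)"
      unfolding mult_ln_div_eq[OF q0 P(1)] mult_ln_div_eq[OF w0(1) P(1)] by (simp add: algebra_simps)
    ultimately show ?thesis by linarith
  qed
  then have "(\<Sum>x\<in>F. - 4 * ((1 + 1 / \<kappa>) * T) powr (3/4) - \<bar>q x - w x\<bar> * L)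
      \<le> (\<Sum>x\<in>F. q x * ln (q x / P x) - w x * ln (w x / P x))" by (intro sum_mono)
  moreover have "(\<Sum>x\<in>F. - 4 * ((1 + 1 / \<kappa>) * T) powr (3/4) - \<bar>q x - w x\<bar> * L)
      = - 4 * card F * ((1 + 1 / \<kappa>) * T) powr (3/4) - L * (\<Sum>x\<in>F. \<bar>q x - w x\<bar>)"
    by (simp add: sum_subtractf sum_distrib_left mult.commute)
  moreover have "card F * ((1 + 1 / \<kappa>) * T) powr (3/4) \<le> CARD('a) * ((1 + 1 / \<kappa>) * T) powr (3/4)"
    by (intro mult_right_mono) (auto intro: card_mono)
  moreover have "L * (\<Sum>x\<in>F. \<bar>q x - w x\<bar>) \<le> L * T" using tv L by (rule mult_left_mono)
  ultimately show ?thesis by linarith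
qed

lemma kl_ge_near_far:
  fixes P w q :: "'a::finite \<Rightarrow> real" and L :: real
  assumes P: "P \<in> distrs" "\<And>x. 0 < P x" "\<And>x. \<bar>ln (P x)\<bar> \<le> L"
    and q: "q \<in> distrs" and w: "w \<in> distrs" and \<kappa>: "0 < \<kappa>" "\<kappa> < 1"
    and chi: "(\<Sum>x\<in>near_set \<kappa> q w. (q x - w x)\<^sup>2 / w x) \<le> X"
    and tv: "(\<Sum>x\<in>- near_set \<kappa> q w. \<bar>q x - w x\<bar>) \<le> T"
  shows "kl w P - sqrt (X * var_log w P) - (2 * L + 1) * T
           - 4 * CARD('a) * ((1 + 1 / \<kappa>) * T) powr (3/4) \<le> kl q P"
proof -
  define N where "N = near_set \<kappa> q w"
  define \<phi> where "\<phi> x = q x * ln (q x / P x) - w x * ln (w x / P x)" for x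
  have pos: "0 < w x \<and> 0 < q x" if "x \<in> N" for x
  proof -
    have "0 < w x" "\<bar>q x - w x\<bar> \<le> \<kappa> * w x" using that by (auto simp: N_def near_set_def)
    moreover have "\<kappa> * w x < w x" using \<open>0 < w x\<close> \<kappa> by simp
    ultimately show ?thesis by linarith
  qed
  have far: "\<kappa> * w x \<le> \<bar>q x - w x\<bar>" if "x \<in> - N" for x
    using that w by (auto simp: N_def near_set_def distrsD less_le)
  have "kl q P - kl w P = (\<Sum>x\<in>N. \<phi> x) + (\<Sum>x\<in>- N. \<phi> x)"
    unfolding kl_eq_sum \<phi>_def sum_subtractf[symmetric] by (rule sum_UNIV_split)
  moreover have "(kl w P + 1) * (\<Sum>x\<in>N. q x - w x) - sqrt (X * var_log w P) \<le> (\<Sum>x\<in>N. \<phi> x)"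
    unfolding \<phi>_def using kl_diff_near_ge[of w P N q X] w P pos chi by (simp add: N_def)
  moreover have "- L * T - 4 * CARD('a) * ((1 + 1 / \<kappa>) * T) powr (3/4) \<le> (\<Sum>x\<in>- N. \<phi> x)"
    unfolding \<phi>_def using kl_diff_far_ge[of q w P L \<kappa> "- N" T] q w P \<kappa> far tv by (simp add: N_def)
  moreover have "- ((L + 1) * T) \<le> (kl w P + 1) * (\<Sum>x\<in>N. q x - w x)"
  proof -
    have "(\<Sum>x\<in>N. q x - w x) = - (\<Sum>x\<in>- N. q x - w x)"
      using sum_diff_distrs_eq_0[OF q w] sum_UNIV_split[of "\<lambda>x. q x - w x" N] by simp
    then have "\<bar>(kl w P + 1) * (\<Sum>x\<in>N. q x - w x)\<bar> \<le> (kl w P + 1) * (\<Sum>x\<in>- N. \<bar>q x - w x\<bar>)"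
      using kl_nonneg[OF w P(1,2)] by (simp add: abs_mult mult_left_mono)
    also have "\<dots> \<le> (L + 1) * T"
      using kl_nonneg[OF w P(1,2)] kl_le_of_abs_ln_le[of w P L] w P tv
      by (intro mult_mono) (auto simp: N_def intro: sum_nonneg)
    finally show ?thesis by linarith
  qed
  moreover have "(2 * L + 1) * T = L * T + (L + 1) * T" by (simp add: algebra_simps)
  ultimately show ?thesis by linarith
qed

lemma kl_score_perturbation:
  fixes P w :: "'a::finite \<Rightarrow> real" and s :: real
  defines "q \<equiv> \<lambda>x. w x * (1 + s * (ln (w x / P x) - kl w P))"
  assumes w: "w \<in> distrs" and P: "\<And>x. 0 < P x"
    and small: "\<And>x. 0 < w x \<Longrightarrow> \<bar>s * (ln (w x / P x) - kl w P)\<bar> \<le> 1/2"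
  shows "q \<in> distrs"
    and "\<bar>q x - w x\<bar> = \<bar>s * (ln (w x / P x) - kl w P)\<bar> * w x"
    and "chi2 q w = s\<^sup>2 * var_log w P"
    and "kl q P \<le> kl w P + s * var_log w P + s\<^sup>2 * var_log w P"
proof -
  define k where "k = kl w P"
  define g where "g x = ln (w x / P x) - k" for x
  have q_def': "q x = w x * (1 + s * g x)" for x by (simp add: q_def g_def k_def)
  have w0: "0 \<le> w x" for x using w by (simp add: distrsD)
  have sum_wg: "(\<Sum>x\<in>UNIV. w x * g x) = 0"
    using w by (simp add: g_def k_def kl_eq_sum right_diff_distrib sum_subtractf
        sum_distrib_right[symmetric] distrsD)
  have sum_wg2: "(\<Sum>x\<in>UNIV. w x * (g x)\<^sup>2) = var_log w P"
    by (simp add: var_log_eq_centered[OF w] g_def k_def)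
  have t_pos: "0 < 1 + s * g x" if "0 < w x" for x
    using small[OF that] by (simp add: g_def k_def abs_le_iff)
  show "q \<in> distrs"
  proof -
    have "0 \<le> q x" for x
      using w0[of x] t_pos[of x] by (cases "w x = 0") (auto simp: q_def' less_le)
    moreover have "(\<Sum>x\<in>UNIV. q x) = (\<Sum>x\<in>UNIV. w x) + s * (\<Sum>x\<in>UNIV. w x * g x)"
      by (simp add: q_def' algebra_simps sum.distrib sum_distrib_left)
    ultimately show ?thesis using w sum_wg by (simp add: distrs_def)
  qed
  show "\<bar>q x - w x\<bar> = \<bar>s * (ln (w x / P x) - kl w P)\<bar> * w x"
  proof -
    have "q x - w x = w x * (s * (ln (w x / P x) - kl w P))" by (simp add: q_def algebra_simps)
    then show ?thesis using w0[of x] by (simp add: abs_mult)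
  qed
  show "chi2 q w = s\<^sup>2 * var_log w P"
  proof -
    have "(q x - w x)\<^sup>2 / w x = s\<^sup>2 * (w x * (g x)\<^sup>2)" for x
      by (cases "w x = 0") (simp_all add: q_def' power2_eq_square field_simps)
    then show ?thesis by (simp add: chi2_def sum_distrib_left[symmetric] sum_wg2)
  qed
  show "kl q P \<le> kl w P + s * var_log w P + s\<^sup>2 * var_log w P"
  proof -
    have "q x * ln (q x / P x)
        \<le> w x * (g x + k) + (s + s\<^sup>2) * (w x * (g x)\<^sup>2) + s * (k + 1) * (w x * g x)" for x
    proof (cases "w x = 0")
      case False
      define t where "t = 1 + s * g x"
      have wx: "0 < w x" and t: "0 < t" using False w0[of x] t_pos[of x] by (auto simp: t_def)
      have "ln (q x / P x) = ln ((w x / P x) * t)" by (simp add: q_def' t_def)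
      also have "\<dots> = ln (w x / P x) + ln t" using wx t P[of x] by (intro ln_mult_pos) auto
      finally have "ln (q x / P x) = ln (w x / P x) + ln t" .
      then have "ln (q x / P x) = g x + k + ln t" by (simp add: g_def)
      then have "q x * ln (q x / P x) = w x * t * (g x + k) + w x * (t * ln t)"
        by (simp add: q_def' t_def[symmetric] algebra_simps)
      also have "\<dots> \<le> w x * t * (g x + k) + w x * (t * (t - 1))"
        using wx t ln_le_minus_one[OF t] by (intro add_left_mono mult_left_mono) auto
      finally show ?thesis by (simp add: t_def power2_eq_square algebra_simps)
    qed (simp add: q_def')
    then have "kl q P \<le> (\<Sum>x\<in>UNIV. w x * (g x + k) + (s + s\<^sup>2) * (w x * (g x)\<^sup>2) + s * (k + 1) * (w x * g x))"
      unfolding kl_eq_sum by (rule sum_mono)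
    also have "\<dots> = (\<Sum>x\<in>UNIV. w x * (g x + k)) + (s + s\<^sup>2) * var_log w P"
      by (simp add: sum.distrib sum_distrib_left[symmetric] sum_wg sum_wg2)
    also have "(\<Sum>x\<in>UNIV. w x * (g x + k)) = kl w P"
      by (simp add: g_def k_def kl_eq_sum)
    finally show ?thesis by (simp add: algebra_simps)
  qed
qed

definition normalized_generator :: "(real \<Rightarrow> real) \<Rightarrow> (real \<Rightarrow> real) \<Rightarrow> bool" where
  "normalized_generator G G' \<longleftrightarrow> convex_on {0<..} G \<and> G 1 = 0 \<and> G' 1 = 0 \<and>
     (\<forall>t. \<bar>t - 1\<bar> < 1/2 \<longrightarrow> (G has_real_derivative G' t) (at t)) \<and> (G' has_real_derivative 1) (at 1)"

lemma MVT_abs: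
  fixes f f' :: "real \<Rightarrow> real"
  assumes "\<And>s. \<bar>s - a\<bar> \<le> \<bar>t - a\<bar> \<Longrightarrow> (f has_real_derivative f' s) (at s)"
  obtains z where "\<bar>z - a\<bar> \<le> \<bar>t - a\<bar>" "f t - f a = (t - a) * f' z"
proof -
  consider "t = a" | "t < a" | "a < t" by linarith
  then show ?thesis
  proof cases
    case 2
    then obtain z where "t < z" "z < a" "f a - f t = (a - t) * f' z"
      using MVT2[of t a f f'] assms by force
    then show ?thesis by (intro that[of z]) (auto simp: algebra_simps)
  next
    case 3
    then obtain z where "a < z" "z < t" "f t - f a = (t - a) * f' z"
      using MVT2[of a t f f'] assms by force
    then show ?thesis by (intro that[of z]) auto
  qed (use that in auto)
qed

lemma quadratic_approx_at_1:
  fixes G G' :: "real \<Rightarrow> real"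
  assumes "0 < \<rho>" and der: "\<And>t. \<bar>t - 1\<bar> < \<rho> \<Longrightarrow> (G has_real_derivative G' t) (at t)"
    and "G 1 = 0" "G' 1 = 0" and der2: "(G' has_real_derivative A) (at 1)" and "0 < \<epsilon>"
  obtains \<kappa> where "0 < \<kappa>" "\<kappa> < \<rho>" "\<And>t. \<bar>t - 1\<bar> \<le> \<kappa> \<Longrightarrow> \<bar>G t - A * (t - 1)\<^sup>2 / 2\<bar> \<le> \<epsilon> * (t - 1)\<^sup>2"
proof -
  have "((\<lambda>y. (G' y - G' 1) / (y - 1)) \<longlongrightarrow> A) (at 1)"
    using der2 by (simp add: has_field_derivative_iff)
  then obtain \<delta> where "0 < \<delta>" and \<delta>: "\<And>y. y \<noteq> 1 \<Longrightarrow> \<bar>y - 1\<bar> < \<delta> \<Longrightarrow> \<bar>G' y / (y - 1) - A\<bar> < \<epsilon>"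
    using \<open>0 < \<epsilon>\<close> \<open>G' 1 = 0\<close> unfolding tendsto_iff eventually_at by (auto simp: dist_real_def)
  have G'_approx: "\<bar>G' y - A * (y - 1)\<bar> \<le> \<epsilon> * \<bar>y - 1\<bar>" if "\<bar>y - 1\<bar> < \<delta>" for y
  proof (cases "y = 1")
    case False
    then have "\<bar>G' y - A * (y - 1)\<bar> = \<bar>G' y / (y - 1) - A\<bar> * \<bar>y - 1\<bar>"
      by (simp add: abs_mult[symmetric] field_simps)
    then show ?thesis using \<delta>[OF False that] by (simp add: mult_right_mono)
  qed (simp add: \<open>G' 1 = 0\<close>)
  define \<kappa> where "\<kappa> = min \<delta> \<rho> / 2"
  have \<kappa>: "0 < \<kappa>" "\<kappa> < \<rho>" "\<kappa> < \<delta>" using \<open>0 < \<delta>\<close> \<open>0 < \<rho>\<close> by (auto simp: \<kappa>_def)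
  define \<psi> where "\<psi> s = G s - A * (s - 1)\<^sup>2 / 2" for s
  have "\<bar>\<psi> t\<bar> \<le> \<epsilon> * (t - 1)\<^sup>2" if t: "\<bar>t - 1\<bar> \<le> \<kappa>" for t
  proof -
    have "(\<psi> has_real_derivative G' s - A * (s - 1)) (at s)" if "\<bar>s - 1\<bar> \<le> \<bar>t - 1\<bar>" for s
      unfolding \<psi>_def using that t \<kappa> by (auto intro!: derivative_eq_intros der simp: power2_eq_square)
    then obtain z where z: "\<bar>z - 1\<bar> \<le> \<bar>t - 1\<bar>" "\<psi> t - \<psi> 1 = (t - 1) * (G' z - A * (z - 1))"
      by (rule MVT_abs)
    have "\<bar>\<psi> t\<bar> = \<bar>t - 1\<bar> * \<bar>G' z - A * (z - 1)\<bar>" using z(2) \<open>G 1 = 0\<close> by (simp add: \<psi>_def abs_mult)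
    also have "\<dots> \<le> \<bar>t - 1\<bar> * (\<epsilon> * \<bar>t - 1\<bar>)"
      using G'_approx[of z] z(1) t \<kappa> \<open>0 < \<epsilon>\<close> by (intro mult_left_mono) (auto intro: order_trans)
    finally show ?thesis by (simp add: power2_eq_square algebra_simps)
  qed
  then show ?thesis using \<kappa> by (intro that[of \<kappa>]) (auto simp: \<psi>_def)
qed

lemma convex_on_toward_1:
  fixes g :: "real \<Rightarrow> real"
  assumes "convex_on {0<..} g" "g 1 = 0" "0 < t" "0 \<le> m" "m \<le> 1"
  shows "g (1 + m * (t - 1)) \<le> m * g t"
  using convex_onD[OF assms(1), of m 1 t] assms(2-) by (simp add: algebra_simps)

lemma convex_on_linear_growth:
  fixes g :: "real \<Rightarrow> real"
  assumes "convex_on {0<..} g" "g 1 = 0" "0 < \<kappa>"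
    and sphere: "\<And>s. \<bar>s - 1\<bar> = \<kappa> \<Longrightarrow> b * \<kappa>\<^sup>2 \<le> g s"
    and "0 < t" "\<kappa> \<le> \<bar>t - 1\<bar>"
  shows "b * \<kappa> * \<bar>t - 1\<bar> \<le> g t"
proof -
  define m where "m = \<kappa> / \<bar>t - 1\<bar>"
  have m: "0 \<le> m" "m \<le> 1" using assms(3,6) by (auto simp: m_def)
  have "\<bar>m * (t - 1)\<bar> = \<kappa>" using assms(3,6) by (simp add: m_def abs_mult)
  then have "b * \<kappa>\<^sup>2 \<le> m * g t"
    using sphere[of "1 + m * (t - 1)"] convex_on_toward_1[OF assms(1,2,5) m] by simp
  then show ?thesis using assms(3,6) by (simp add: m_def power2_eq_square field_simps)
qed

lemma normalized_generator_bounds: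
  assumes G: "normalized_generator G G'" and "0 < \<epsilon>" "\<epsilon> < 1"
  obtains \<kappa> c where "0 < \<kappa>" "\<kappa> < 1/2" "0 < c"
    "\<And>t. \<bar>t - 1\<bar> \<le> \<kappa> \<Longrightarrow> (1 - \<epsilon>) * (t - 1)\<^sup>2 / 2 \<le> G t \<and> G t \<le> (1 + \<epsilon>) * (t - 1)\<^sup>2 / 2"
    "\<And>t. 0 < t \<Longrightarrow> \<kappa> \<le> \<bar>t - 1\<bar> \<Longrightarrow> c * \<bar>t - 1\<bar> \<le> G t"
proof -
  obtain \<kappa> where \<kappa>: "0 < \<kappa>" "\<kappa> < 1/2"
    and approx: "\<And>t. \<bar>t - 1\<bar> \<le> \<kappa> \<Longrightarrow> \<bar>G t - 1 * (t - 1)\<^sup>2 / 2\<bar> \<le> \<epsilon> / 2 * (t - 1)\<^sup>2"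
    using quadratic_approx_at_1[of "1/2" G G' 1 "\<epsilon>/2"] G \<open>0 < \<epsilon>\<close>
    unfolding normalized_generator_def by auto
  have near: "(1 - \<epsilon>) * (t - 1)\<^sup>2 / 2 \<le> G t \<and> G t \<le> (1 + \<epsilon>) * (t - 1)\<^sup>2 / 2"
    if "\<bar>t - 1\<bar> \<le> \<kappa>" for t
    using approx[OF that] by (auto simp: field_simps abs_le_iff)
  have "(1 - \<epsilon>) / 2 * \<kappa> * \<bar>t - 1\<bar> \<le> G t" if "0 < t" "\<kappa> \<le> \<bar>t - 1\<bar>" for t
  proof (rule convex_on_linear_growth[OF _ _ \<kappa>(1) _ that])
    show "convex_on {0<..} G" "G 1 = 0" using G by (auto simp: normalized_generator_def)
  next
    fix s assume "\<bar>s - 1\<bar> = \<kappa>"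
    then have "(s - 1)\<^sup>2 = \<kappa>\<^sup>2" by (metis power2_abs)
    then show "(1 - \<epsilon>) / 2 * \<kappa>\<^sup>2 \<le> G s" using near[of s] \<open>\<bar>s - 1\<bar> = \<kappa>\<close> by simp
  qed
  moreover have "0 < (1 - \<epsilon>) / 2 * \<kappa>" using \<open>\<epsilon> < 1\<close> \<kappa> by simp
  ultimately show ?thesis using that \<kappa> near by blast
qed

lemma normalized_generator_pos:
  assumes G: "normalized_generator G G'" and "0 < t" "t \<noteq> 1"
  shows "0 < G t"
proof -
  obtain \<kappa> c where "0 < c"
    and near: "\<And>t. \<bar>t - 1\<bar> \<le> \<kappa> \<Longrightarrow> (1 - 1/2) * (t - 1)\<^sup>2 / 2 \<le> G t \<and> G t \<le> (1 + 1/2) * (t - 1)\<^sup>2 / 2"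
    and far: "\<And>t. 0 < t \<Longrightarrow> \<kappa> \<le> \<bar>t - 1\<bar> \<Longrightarrow> c * \<bar>t - 1\<bar> \<le> G t"
    by (rule normalized_generator_bounds[OF G, of "1/2"]) auto
  show ?thesis
  proof (cases "\<bar>t - 1\<bar> \<le> \<kappa>")
    case True
    have "0 < (1 - 1/2) * (t - 1)\<^sup>2 / (2::real)" using \<open>t \<noteq> 1\<close> by simp
    then show ?thesis using near[OF True] by linarith
  next
    case False
    have "0 < c * \<bar>t - 1\<bar>" using \<open>0 < c\<close> \<open>t \<noteq> 1\<close> by simp
    then show ?thesis using far[of t] False \<open>0 < t\<close> by linarith
  qed
qed

lemma normalized_generator_fun_upd_0:
  assumes "normalized_generator G G'"
  shows "normalized_generator (G(0 := z)) G'"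
proof -
  have cvx: "convex_on {0<..} G" and G1: "G 1 = 0" "G' 1 = 0"
    and der: "\<And>t. \<bar>t - 1\<bar> < 1/2 \<Longrightarrow> (G has_real_derivative G' t) (at t)"
    and der2: "(G' has_real_derivative 1) (at 1)"
    using assms by (auto simp: normalized_generator_def)
  have "convex_on {0<..} (G(0 := z))"
  proof (rule convex_onI)
    fix t x y :: real assume t: "0 < t" "t < 1" and xy: "x \<in> {0<..}" "y \<in> {0<..}"
    have "0 < (1 - t) * x + t * y" using t xy by (simp add: add_pos_pos)
    then have "(1 - t) * x + t * y \<noteq> 0" "x \<noteq> 0" "y \<noteq> 0" using xy by auto
    then show "(G(0 := z)) ((1 - t) *\<^sub>R x + t *\<^sub>R y) \<le> (1 - t) * (G(0 := z)) x + t * (G(0 := z)) y"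
      using convex_onD[OF cvx, of t x y] t xy by simp
  qed simp
  moreover have "(G(0 := z) has_real_derivative G' t) (at t)" if "\<bar>t - 1\<bar> < 1/2" for t
  proof (rule has_field_derivative_transform_within_open[OF der[OF that]])
    show "open {1/2<..<3/2::real}" by simp
    show "t \<in> {1/2<..<3/2}" using that unfolding abs_less_iff by simp
  qed auto
  ultimately show ?thesis using G1 der2 by (simp add: normalized_generator_def)
qed

text \<open>The real-valued f-divergence with generator \<open>G\<close>; the slope \<open>C\<close> prices the mass that \<open>q\<close> puts
  outside the support of \<open>w\<close>.\<close>
definition gdiv :: "(real \<Rightarrow> real) \<Rightarrow> real \<Rightarrow> ('a::finite \<Rightarrow> real) \<Rightarrow> ('a \<Rightarrow> real) \<Rightarrow> real" where
  "gdiv G C q w = (\<Sum>x\<in>UNIV. if 0 < w x then w x * G (q x / w x) else C * q x)"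

lemma gdiv_indep_slope:
  assumes "w \<in> distrs" "\<And>x. w x = 0 \<Longrightarrow> q x = 0"
  shows "gdiv G C q w = gdiv G C' q w"
  unfolding gdiv_def using assms by (intro sum.cong) (auto simp: distrsD less_le)

text \<open>The two properties of a divergence \<open>d\<close> of local curvature \<open>\<alpha>\<close> on which the asymptotics rest:
  \<open>d q w \<le> r\<close> forces \<open>q\<close> to be \<open>\<chi>\<^sup>2\<close>-close to \<open>w\<close> where \<open>q/w\<close> is near 1 and close in total variation
  elsewhere; conversely, a small \<open>\<chi>\<^sup>2\<close> with \<open>q/w\<close> uniformly near 1 forces \<open>d q w \<le> r\<close>.\<close>
definition div_bounds_chi2 :: "real \<Rightarrow> (('a::finite \<Rightarrow> real) \<Rightarrow> ('a \<Rightarrow> real) \<Rightarrow> ereal) \<Rightarrow> bool" where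
  "div_bounds_chi2 \<alpha> d \<longleftrightarrow> (\<forall>\<epsilon>. 0 < \<epsilon> \<and> \<epsilon> < 1 \<longrightarrow> (\<exists>\<kappa> c r0. 0 < \<kappa> \<and> \<kappa> < 1 \<and> 0 < c \<and> 0 < r0 \<and>
     (\<forall>r q w. 0 < r \<and> r < r0 \<and> q \<in> distrs \<and> w \<in> distrs \<and> d q w \<le> ereal r \<longrightarrow>
        (1 - \<epsilon>) / 2 * (\<Sum>x\<in>near_set \<kappa> q w. (q x - w x)\<^sup>2 / w x)
          + c * (\<Sum>x\<in>- near_set \<kappa> q w. \<bar>q x - w x\<bar>) \<le> (1 + \<epsilon>) * r / \<alpha>)))"

definition chi2_bounds_div :: "real \<Rightarrow> (('a::finite \<Rightarrow> real) \<Rightarrow> ('a \<Rightarrow> real) \<Rightarrow> ereal) \<Rightarrow> bool" where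
  "chi2_bounds_div \<alpha> d \<longleftrightarrow> (\<forall>\<epsilon>. 0 < \<epsilon> \<and> \<epsilon> < 1 \<longrightarrow> (\<exists>\<kappa> r0. 0 < \<kappa> \<and> 0 < r0 \<and>
     (\<forall>r q w. 0 < r \<and> r < r0 \<and> q \<in> distrs \<and> w \<in> distrs \<and> (\<forall>x. \<bar>q x - w x\<bar> \<le> \<kappa> * w x) \<and>
        chi2 q w \<le> 2 * (1 - \<epsilon>) * r / \<alpha> \<longrightarrow> d q w \<le> ereal r)))"

lemma mult_sq_ratio_minus_1: "0 < w \<Longrightarrow> w * (q / w - 1)\<^sup>2 = (q - w)\<^sup>2 / (w::real)"
  by (simp add: field_simps power2_eq_square)

lemma near_far_le_gdiv:
  assumes G: "normalized_generator G G'" and "0 < G 0" "0 < C" "0 < \<epsilon>" "\<epsilon> < 1"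
  obtains \<kappa> c where "0 < \<kappa>" "\<kappa> < 1" "0 < c"
    "\<And>q w :: 'a::finite \<Rightarrow> real. q \<in> distrs \<Longrightarrow> w \<in> distrs \<Longrightarrow>
       (1 - \<epsilon>) / 2 * (\<Sum>x\<in>near_set \<kappa> q w. (q x - w x)\<^sup>2 / w x)
         + c * (\<Sum>x\<in>- near_set \<kappa> q w. \<bar>q x - w x\<bar>) \<le> gdiv G C q w"
proof -
  obtain \<kappa> c where \<kappa>: "0 < \<kappa>" "\<kappa> < 1/2" "0 < c"
    and near: "\<And>t. \<bar>t - 1\<bar> \<le> \<kappa> \<Longrightarrow> (1 - \<epsilon>) * (t - 1)\<^sup>2 / 2 \<le> G t"
    and far: "\<And>t. 0 < t \<Longrightarrow> \<kappa> \<le> \<bar>t - 1\<bar> \<Longrightarrow> c * \<bar>t - 1\<bar> \<le> G t"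
    by (rule normalized_generator_bounds[OF G \<open>0 < \<epsilon>\<close> \<open>\<epsilon> < 1\<close>]) blast
  define c' where "c' = min c (min (G 0) C)"
  have "(1 - \<epsilon>) / 2 * (\<Sum>x\<in>near_set \<kappa> q w. (q x - w x)\<^sup>2 / w x)
      + c' * (\<Sum>x\<in>- near_set \<kappa> q w. \<bar>q x - w x\<bar>) \<le> gdiv G C q w"
    if q: "q \<in> distrs" and w: "w \<in> distrs" for q w :: "'a \<Rightarrow> real"
  proof -
    define a where "a x = (if 0 < w x then w x * G (q x / w x) else C * q x)" for x
    have ratio: "\<bar>q x / w x - 1\<bar> = \<bar>q x - w x\<bar> / w x" if "0 < w x" for x
      using that by (simp add: field_simps)
    have "(1 - \<epsilon>) / 2 * ((q x - w x)\<^sup>2 / w x) \<le> a x" if "x \<in> near_set \<kappa> q w" for x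
    proof -
      from that have wx: "0 < w x" and "\<bar>q x / w x - 1\<bar> \<le> \<kappa>"
        by (auto simp: near_set_def ratio field_simps)
      then have "w x * ((1 - \<epsilon>) / 2 * (q x / w x - 1)\<^sup>2) \<le> w x * G (q x / w x)"
        using near by (intro mult_left_mono) auto
      moreover have "w x * ((1 - \<epsilon>) / 2 * (q x / w x - 1)\<^sup>2) = (1 - \<epsilon>) / 2 * ((q x - w x)\<^sup>2 / w x)"
        by (subst mult_sq_ratio_minus_1[OF wx, symmetric]) (simp add: algebra_simps)
      moreover have "a x = w x * G (q x / w x)" using wx by (simp add: a_def)
      ultimately show ?thesis by linarith
    qed
    then have "(1 - \<epsilon>) / 2 * (\<Sum>x\<in>near_set \<kappa> q w. (q x - w x)\<^sup>2 / w x) \<le> (\<Sum>x\<in>near_set \<kappa> q w. a x)"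
      by (simp add: sum_distrib_left sum_mono)
    moreover have far_le: "c' * \<bar>q x - w x\<bar> \<le> a x" if "x \<in> - near_set \<kappa> q w" for x
    proof -
      have q0: "0 \<le> q x" and w0: "0 \<le> w x" using q w by (auto simp: distrsD)
      show ?thesis
      proof (cases "0 < w x")
        case False
        then show ?thesis using q0 w0 \<open>0 < C\<close> by (simp add: a_def c'_def mult_right_mono)
      next
        case wx: True
        show ?thesis
        proof (cases "q x = 0")
          case True
          then show ?thesis using wx \<open>0 < G 0\<close> by (simp add: a_def c'_def mult_right_mono mult.commute)
        next
          case False
          with q0 have "0 < q x" by simp
          moreover have "\<kappa> \<le> \<bar>q x / w x - 1\<bar>"
            using that wx by (simp add: near_set_def ratio field_simps)
          ultimately have "w x * (c * \<bar>q x / w x - 1\<bar>) \<le> w x * G (q x / w x)"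
            using wx far by (intro mult_left_mono) auto
          then have "c * \<bar>q x - w x\<bar> \<le> a x" using wx by (simp add: a_def ratio)
          moreover have "c' * \<bar>q x - w x\<bar> \<le> c * \<bar>q x - w x\<bar>" by (simp add: c'_def mult_right_mono)
          ultimately show ?thesis by linarith
        qed
      qed
    qed
    then have "c' * (\<Sum>x\<in>- near_set \<kappa> q w. \<bar>q x - w x\<bar>) \<le> (\<Sum>x\<in>- near_set \<kappa> q w. a x)"
      unfolding sum_distrib_left using far_le by (intro sum_mono) blast
    moreover have "(\<Sum>x\<in>near_set \<kappa> q w. a x) + (\<Sum>x\<in>- near_set \<kappa> q w. a x) = gdiv G C q w"
      by (simp add: gdiv_def a_def flip: sum_UNIV_split)
    ultimately show ?thesis by linarith
  qed
  moreover have "0 < c'" using \<kappa> \<open>0 < G 0\<close> \<open>0 < C\<close> by (simp add: c'_def)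
  ultimately show ?thesis using \<kappa> by (intro that[of \<kappa> c']) auto
qed

lemma gdiv_le_chi2:
  assumes G: "normalized_generator G G'" and "0 < \<epsilon>" "\<epsilon> < 1"
  obtains \<kappa> where "0 < \<kappa>" "\<kappa> < 1/2"
    "\<And>q w :: 'a::finite \<Rightarrow> real. w \<in> distrs \<Longrightarrow> (\<And>x. \<bar>q x - w x\<bar> \<le> \<kappa> * w x) \<Longrightarrow>
       gdiv G C q w \<le> (1 + \<epsilon>) / 2 * chi2 q w"
proof -
  obtain \<kappa> where \<kappa>: "0 < \<kappa>" "\<kappa> < 1/2"
    and near: "\<And>t. \<bar>t - 1\<bar> \<le> \<kappa> \<Longrightarrow> G t \<le> (1 + \<epsilon>) * (t - 1)\<^sup>2 / 2"
    by (rule normalized_generator_bounds[OF G \<open>0 < \<epsilon>\<close> \<open>\<epsilon> < 1\<close>]) blast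
  have "gdiv G C q w \<le> (1 + \<epsilon>) / 2 * chi2 q w"
    if w: "w \<in> distrs" and close: "\<And>x. \<bar>q x - w x\<bar> \<le> \<kappa> * w x" for q w :: "'a \<Rightarrow> real"
  proof -
    have "(if 0 < w x then w x * G (q x / w x) else C * q x) \<le> (1 + \<epsilon>) / 2 * ((q x - w x)\<^sup>2 / w x)" for x
    proof (cases "0 < w x")
      case True
      then have "\<bar>q x / w x - 1\<bar> \<le> \<kappa>" using close[of x] by (simp add: field_simps)
      then have "w x * G (q x / w x) \<le> w x * ((1 + \<epsilon>) / 2 * (q x / w x - 1)\<^sup>2)"
        using True near by (intro mult_left_mono) auto
      moreover have "w x * ((1 + \<epsilon>) / 2 * (q x / w x - 1)\<^sup>2) = (1 + \<epsilon>) / 2 * ((q x - w x)\<^sup>2 / w x)"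
        by (subst mult_sq_ratio_minus_1[OF True, symmetric]) (simp add: algebra_simps)
      moreover have "(if 0 < w x then w x * G (q x / w x) else C * q x) = w x * G (q x / w x)"
        using True by simp
      ultimately show ?thesis by linarith
    next
      case False
      then have "w x = 0" using w by (simp add: distrsD less_le)
      then show ?thesis using close[of x] by simp
    qed
    then show ?thesis unfolding gdiv_def chi2_def sum_distrib_left by (rule sum_mono)
  qed
  then show ?thesis using \<kappa> by (intro that) auto
qed

lemma div_bounds_chi2I:
  fixes d :: "('a::finite \<Rightarrow> real) \<Rightarrow> ('a \<Rightarrow> real) \<Rightarrow> ereal"
  assumes G: "normalized_generator G G'" and "0 < G 0" "0 < C"
    and le: "\<And>\<epsilon>. 0 < \<epsilon> \<Longrightarrow> \<epsilon> < 1 \<Longrightarrow> \<exists>r0>0. \<forall>r q w. 0 < r \<and> r < r0 \<and> q \<in> distrs \<and> w \<in> distrs \<and>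
               d q w \<le> ereal r \<longrightarrow> gdiv G C q w \<le> (1 + \<epsilon>) * r / \<alpha>"
  shows "div_bounds_chi2 \<alpha> d"
  unfolding div_bounds_chi2_def
proof (intro allI impI)
  fix \<epsilon> :: real assume \<epsilon>: "0 < \<epsilon> \<and> \<epsilon> < 1"
  obtain \<kappa> c where "0 < \<kappa>" "\<kappa> < 1" "0 < c" and bound: "\<And>q w :: 'a \<Rightarrow> real. q \<in> distrs \<Longrightarrow> w \<in> distrs \<Longrightarrow>
       (1 - \<epsilon>) / 2 * (\<Sum>x\<in>near_set \<kappa> q w. (q x - w x)\<^sup>2 / w x)
         + c * (\<Sum>x\<in>- near_set \<kappa> q w. \<bar>q x - w x\<bar>) \<le> gdiv G C q w"
    by (rule near_far_le_gdiv[OF G \<open>0 < G 0\<close> \<open>0 < C\<close>, of \<epsilon>]) (use \<epsilon> in blast)+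
  obtain r0 where "0 < r0" and r0: "\<forall>r q w. 0 < r \<and> r < r0 \<and> q \<in> distrs \<and> w \<in> distrs \<and>
      d q w \<le> ereal r \<longrightarrow> gdiv G C q w \<le> (1 + \<epsilon>) * r / \<alpha>"
    using le \<epsilon> by blast
  have "(1 - \<epsilon>) / 2 * (\<Sum>x\<in>near_set \<kappa> q w. (q x - w x)\<^sup>2 / w x)
      + c * (\<Sum>x\<in>- near_set \<kappa> q w. \<bar>q x - w x\<bar>) \<le> (1 + \<epsilon>) * r / \<alpha>"
    if "0 < r \<and> r < r0 \<and> q \<in> distrs \<and> w \<in> distrs \<and> d q w \<le> ereal r" for r q w
    using bound[of q w] r0[rule_format, of r q w] that by linarith
  then show "\<exists>\<kappa> c r0. 0 < \<kappa> \<and> \<kappa> < 1 \<and> 0 < c \<and> 0 < r0 \<and>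
     (\<forall>r q w. 0 < r \<and> r < r0 \<and> q \<in> distrs \<and> w \<in> distrs \<and> d q w \<le> ereal r \<longrightarrow>
        (1 - \<epsilon>) / 2 * (\<Sum>x\<in>near_set \<kappa> q w. (q x - w x)\<^sup>2 / w x)
          + c * (\<Sum>x\<in>- near_set \<kappa> q w. \<bar>q x - w x\<bar>) \<le> (1 + \<epsilon>) * r / \<alpha>)"
    using \<open>0 < \<kappa>\<close> \<open>\<kappa> < 1\<close> \<open>0 < c\<close> \<open>0 < r0\<close> by blast
qed

lemma chi2_bounds_divI:
  fixes d :: "('a::finite \<Rightarrow> real) \<Rightarrow> ('a \<Rightarrow> real) \<Rightarrow> ereal"
  assumes G: "normalized_generator G G'" and "0 < \<alpha>"
    and le: "\<And>\<epsilon>. 0 < \<epsilon> \<Longrightarrow> \<epsilon> < 1 \<Longrightarrow> \<exists>r0>0. \<forall>r q w. 0 < r \<and> r < r0 \<and> q \<in> distrs \<and> w \<in> distrs \<and>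
               (\<forall>x. 0 < q x \<longleftrightarrow> 0 < w x) \<and> gdiv G 0 q w \<le> (1 - \<epsilon>\<^sup>2) * r / \<alpha> \<longrightarrow> d q w \<le> ereal r"
  shows "chi2_bounds_div \<alpha> d"
  unfolding chi2_bounds_div_def
proof (intro allI impI)
  fix \<epsilon> :: real assume \<epsilon>: "0 < \<epsilon> \<and> \<epsilon> < 1"
  obtain \<kappa> where \<kappa>: "0 < \<kappa>" "\<kappa> < 1/2" and bound: "\<And>q w :: 'a \<Rightarrow> real. w \<in> distrs \<Longrightarrow>
      (\<And>x. \<bar>q x - w x\<bar> \<le> \<kappa> * w x) \<Longrightarrow> gdiv G 0 q w \<le> (1 + \<epsilon>) / 2 * chi2 q w"
    by (rule gdiv_le_chi2[OF G, of \<epsilon>]) (use \<epsilon> in blast)+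
  obtain r0 where "0 < r0" and r0: "\<forall>r q w. 0 < r \<and> r < r0 \<and> q \<in> distrs \<and> w \<in> distrs \<and>
      (\<forall>x. 0 < q x \<longleftrightarrow> 0 < w x) \<and> gdiv G 0 q w \<le> (1 - \<epsilon>\<^sup>2) * r / \<alpha> \<longrightarrow> d q w \<le> ereal r"
    using le \<epsilon> by blast
  have "d q w \<le> ereal r"
    if "0 < r" "r < r0" "q \<in> distrs" "w \<in> distrs" and close: "\<forall>x. \<bar>q x - w x\<bar> \<le> \<kappa> * w x"
      and chi: "chi2 q w \<le> 2 * (1 - \<epsilon>) * r / \<alpha>" for r q w
  proof (rule r0[rule_format], intro conjI)
    show "\<forall>x. 0 < q x \<longleftrightarrow> 0 < w x"
    proof
      fix x
      have "0 \<le> w x" using \<open>w \<in> distrs\<close> by (simp add: distrsD)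
      moreover have "\<kappa> * w x \<le> 1/2 * w x" using \<kappa> \<open>0 \<le> w x\<close> by (intro mult_right_mono) auto
      ultimately show "0 < q x \<longleftrightarrow> 0 < w x"
        using close[rule_format, of x] unfolding abs_le_iff by (intro iffI) linarith+
    qed
    have "gdiv G 0 q w \<le> (1 + \<epsilon>) / 2 * chi2 q w" using bound[OF \<open>w \<in> distrs\<close>] close by blast
    also have "\<dots> \<le> (1 + \<epsilon>) / 2 * (2 * (1 - \<epsilon>) * r / \<alpha>)" using chi \<epsilon> by (intro mult_left_mono) auto
    also have "\<dots> = (1 - \<epsilon>\<^sup>2) * r / \<alpha>" using \<open>0 < \<alpha>\<close> by (simp add: power2_eq_square field_simps)
    finally show "gdiv G 0 q w \<le> (1 - \<epsilon>\<^sup>2) * r / \<alpha>" .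
  qed (use that in auto)
  then show "\<exists>\<kappa> r0. 0 < \<kappa> \<and> 0 < r0 \<and> (\<forall>r q w. 0 < r \<and> r < r0 \<and> q \<in> distrs \<and> w \<in> distrs \<and>
      (\<forall>x. \<bar>q x - w x\<bar> \<le> \<kappa> * w x) \<and> chi2 q w \<le> 2 * (1 - \<epsilon>) * r / \<alpha> \<longrightarrow> d q w \<le> ereal r)"
    using \<kappa> \<open>0 < r0\<close> by blast
qed

definition renyi_generator :: "real \<Rightarrow> real \<Rightarrow> real" where
  "renyi_generator \<alpha> t = (t powr \<alpha> - 1 - \<alpha> * (t - 1)) / (\<alpha> * (\<alpha> - 1))"

definition kl_generator :: "real \<Rightarrow> real" where
  "kl_generator t = t * ln t - t + 1"

definition renyi_sum :: "real \<Rightarrow> ('a::finite \<Rightarrow> real) \<Rightarrow> ('a \<Rightarrow> real) \<Rightarrow> real" where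
  "renyi_sum \<alpha> q w = (\<Sum>x\<in>{x. 0 < q x \<and> 0 < w x}. q x powr \<alpha> * w x powr (1 - \<alpha>))"

lemma normalized_generator_renyi:
  assumes "0 < \<alpha>" "\<alpha> \<noteq> 1"
  shows "normalized_generator (renyi_generator \<alpha>) (\<lambda>t. (t powr (\<alpha> - 1) - 1) / (\<alpha> - 1))"
proof -
  have der: "(renyi_generator \<alpha> has_real_derivative (t powr (\<alpha> - 1) - 1) / (\<alpha> - 1)) (at t)" if "0 < t" for t
  proof -
    have "((\<lambda>t. t powr \<alpha>) has_real_derivative \<alpha> * t powr (\<alpha> - 1)) (at t)"
      using that by (rule has_real_derivative_powr)
    then have "(renyi_generator \<alpha> has_real_derivative
        (\<alpha> * t powr (\<alpha> - 1) - 0 - \<alpha> * (1 - 0)) / (\<alpha> * (\<alpha> - 1))) (at t)"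
      unfolding renyi_generator_def[abs_def]
      by (intro DERIV_cdivide DERIV_diff DERIV_const DERIV_cmult DERIV_ident)
    moreover have "(\<alpha> * t powr (\<alpha> - 1) - \<alpha>) / (\<alpha> * (\<alpha> - 1)) = (t powr (\<alpha> - 1) - 1) / (\<alpha> - 1)"
      using assms by (simp add: field_simps)
    ultimately show ?thesis by simp
  qed
  have "((\<lambda>t. (t powr (\<alpha> - 1) - 1) / (\<alpha> - 1)) has_real_derivative 1) (at 1)"
    using assms by (auto intro!: derivative_eq_intros)
  moreover have "convex_on {0<..} (renyi_generator \<alpha>)"
  proof (rule convex_on_realI[OF _ der])
    fix x y :: real assume xy: "x \<in> {0<..}" "y \<in> {0<..}" "x \<le> y"
    show "(x powr (\<alpha> - 1) - 1) / (\<alpha> - 1) \<le> (y powr (\<alpha> - 1) - 1) / (\<alpha> - 1)"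
    proof (cases "1 < \<alpha>")
      case True
      then have "x powr (\<alpha> - 1) \<le> y powr (\<alpha> - 1)" using xy by (intro powr_mono2) auto
      then show ?thesis using True by (simp add: divide_right_mono)
    next
      case False
      then have "y powr (\<alpha> - 1) \<le> x powr (\<alpha> - 1)" using xy assms by (intro powr_mono2') auto
      then show ?thesis using False assms by (simp add: divide_right_mono_neg)
    qed
  qed auto
  moreover have "\<bar>t - 1\<bar> < 1/2 \<Longrightarrow> 0 < t" for t :: real by linarith
  ultimately show ?thesis using der by (auto simp: normalized_generator_def renyi_generator_def)
qed

lemma renyi_generator_0: "0 < \<alpha> \<Longrightarrow> \<alpha> \<noteq> 1 \<Longrightarrow> renyi_generator \<alpha> 0 = 1 / \<alpha>"
  by (simp add: renyi_generator_def field_simps)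

lemma normalized_generator_kl: "normalized_generator kl_generator ln"
proof -
  have der: "(kl_generator has_real_derivative ln t) (at t)" if "0 < t" for t
    unfolding kl_generator_def[abs_def] using that by (auto intro!: derivative_eq_intros)
  moreover have "convex_on {0<..} kl_generator"
    by (rule convex_on_realI[OF _ der]) auto
  moreover have "\<bar>t - 1\<bar> < 1/2 \<Longrightarrow> 0 < t" for t :: real by linarith
  ultimately show ?thesis
    using DERIV_ln[of 1] by (auto simp: normalized_generator_def kl_generator_def)
qed

lemma abs_cont_iff: "q \<in> distrs \<Longrightarrow> (\<not> (\<exists>x. 0 < q x \<and> w x = 0)) \<longleftrightarrow> (\<forall>x. w x = 0 \<longrightarrow> q x = 0)"
  by (auto simp: distrsD less_le)

lemma kl_eq_gdiv:
  assumes q: "q \<in> distrs" and w: "w \<in> distrs" and ac: "\<And>x. w x = 0 \<Longrightarrow> q x = 0"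
  shows "kl q w = gdiv kl_generator C q w"
proof -
  have "q x * ln (q x / w x) = (if 0 < w x then w x * kl_generator (q x / w x) else C * q x) + (q x - w x)" for x
  proof (cases "0 < w x")
    case False
    then have "w x = 0" "q x = 0" using ac[of x] w by (auto simp: distrsD less_le)
    then show ?thesis by simp
  qed (simp add: kl_generator_def field_simps)
  then have "kl q w = gdiv kl_generator C q w + (\<Sum>x\<in>UNIV. q x - w x)"
    by (simp add: kl_eq_sum gdiv_def sum.distrib)
  then show ?thesis using sum_diff_distrs_eq_0[OF q w] by simp
qed

lemma kl_ext_le_ereal:
  assumes "q \<in> distrs" "kl_ext q w \<le> ereal r"
  shows "\<And>x. w x = 0 \<Longrightarrow> q x = 0" "kl q w \<le> r"
proof -
  have "(\<exists>x. 0 < q x \<and> w x = 0) = False"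
    using assms(2) by (cases "\<exists>x. 0 < q x \<and> w x = 0") (auto simp: kl_ext_def)
  then show "\<And>x. w x = 0 \<Longrightarrow> q x = 0" "kl q w \<le> r"
    using assms abs_cont_iff[OF assms(1), of w] by (simp_all only: kl_ext_def if_False) auto
qed

lemma renyi_sum_eq_gdiv:
  assumes "0 < \<alpha>" "\<alpha> \<noteq> 1" and q: "q \<in> distrs" and w: "w \<in> distrs"
  shows "renyi_sum \<alpha> q w = 1 + \<alpha> * (\<alpha> - 1) * gdiv (renyi_generator \<alpha>) (1 / (1 - \<alpha>)) q w"
proof -
  have pt: "(if 0 < q x \<and> 0 < w x then q x powr \<alpha> * w x powr (1 - \<alpha>) else 0)
      = w x + \<alpha> * (q x - w x) + \<alpha> * (\<alpha> - 1) *
          (if 0 < w x then w x * renyi_generator \<alpha> (q x / w x) else 1 / (1 - \<alpha>) * q x)" for x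
  proof (cases "0 < w x")
    case True
    have "q x powr \<alpha> * w x powr (1 - \<alpha>) = w x * (q x / w x) powr \<alpha>" if "0 < q x"
      using True that by (simp add: powr_diff powr_divide field_simps)
    then show ?thesis using True q assms(1,2)
      by (auto simp: renyi_generator_def distrsD field_simps less_le)
  next
    case False
    then have "w x = 0" using w by (simp add: distrsD less_le)
    then show ?thesis using assms(2) by (simp add: field_simps)
  qed
  have "renyi_sum \<alpha> q w = (\<Sum>x\<in>UNIV. if 0 < q x \<and> 0 < w x then q x powr \<alpha> * w x powr (1 - \<alpha>) else 0)"
    by (simp add: renyi_sum_def sum.If_cases)
  also have "\<dots> = (\<Sum>x\<in>UNIV. w x + \<alpha> * (q x - w x) + \<alpha> * (\<alpha> - 1) *
          (if 0 < w x then w x * renyi_generator \<alpha> (q x / w x) else 1 / (1 - \<alpha>) * q x))"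
    by (rule sum.cong[OF refl pt])
  also have "\<dots> = (\<Sum>x\<in>UNIV. w x) + \<alpha> * (\<Sum>x\<in>UNIV. q x - w x)
      + \<alpha> * (\<alpha> - 1) * gdiv (renyi_generator \<alpha>) (1 / (1 - \<alpha>)) q w"
    by (simp only: gdiv_def sum.distrib sum_distrib_left)
  finally show ?thesis using q w by (simp add: sum_diff_distrs_eq_0 distrsD)
qed

lemma renyi_sum_pos:
  assumes q: "q \<in> distrs" and ac: "\<And>x. w x = 0 \<Longrightarrow> q x = 0" and w: "w \<in> distrs"
  shows "0 < renyi_sum \<alpha> q w"
proof -
  obtain x where "0 < q x"
    using q by (metis distrsD(1,2) less_eq_real_def sum.neutral zero_neq_one)
  moreover have "0 < w x" using ac[of x] w \<open>0 < q x\<close> by (auto simp: distrsD less_le)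
  ultimately have "0 < q x powr \<alpha> * w x powr (1 - \<alpha>)" by simp
  also have "\<dots> \<le> renyi_sum \<alpha> q w"
    unfolding renyi_sum_def using \<open>0 < q x\<close> \<open>0 < w x\<close> by (intro member_le_sum) auto
  finally show ?thesis .
qed

lemma renyi_div_eq:
  "\<alpha> \<noteq> 1 \<Longrightarrow> renyi_div \<alpha> q w =
     (if 1 < \<alpha> \<and> (\<exists>x. 0 < q x \<and> w x = 0) then \<infinity>
      else if renyi_sum \<alpha> q w = 0 then \<infinity> else ereal (ln (renyi_sum \<alpha> q w) / (\<alpha> - 1)))"
  by (simp add: renyi_div_def renyi_sum_def Let_def)

lemma renyi_div_le_ereal:
  assumes "\<alpha> \<noteq> 1" "q \<in> distrs" "renyi_div \<alpha> q w \<le> ereal r"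
  shows "0 < renyi_sum \<alpha> q w" "ln (renyi_sum \<alpha> q w) / (\<alpha> - 1) \<le> r"
    and "1 < \<alpha> \<Longrightarrow> w x = 0 \<Longrightarrow> q x = 0"
proof -
  have "0 \<le> renyi_sum \<alpha> q w" unfolding renyi_sum_def by (intro sum_nonneg) auto
  then show "0 < renyi_sum \<alpha> q w" "ln (renyi_sum \<alpha> q w) / (\<alpha> - 1) \<le> r"
    using assms by (auto simp: renyi_div_eq split: if_splits)
  assume "1 < \<alpha>" "w x = 0"
  then have "\<not> (\<exists>x. 0 < q x \<and> w x = 0)"
    using assms by (cases "\<exists>x. 0 < q x \<and> w x = 0") (auto simp: renyi_div_eq)
  then show "q x = 0" using abs_cont_iff[OF assms(2), of w] \<open>w x = 0\<close> by blast
qed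

lemma renyi_div_le_ereal_iff:
  assumes "\<alpha> \<noteq> 1" "q \<in> distrs" "\<And>x. w x = 0 \<Longrightarrow> q x = 0" "0 < renyi_sum \<alpha> q w"
  shows "renyi_div \<alpha> q w \<le> ereal r \<longleftrightarrow> ln (renyi_sum \<alpha> q w) / (\<alpha> - 1) \<le> r"
proof -
  have "(1 < \<alpha> \<and> (\<exists>x. 0 < q x \<and> w x = 0)) = False"
    using abs_cont_iff[OF assms(2), of w] assms(3) by blast
  moreover have "(renyi_sum \<alpha> q w = 0) = False" using assms(4) by simp
  ultimately show ?thesis by (simp only: renyi_div_eq[OF assms(1)] if_False) simp
qed

lemma kl_ext_chi2_bounds:
  "div_bounds_chi2 1 (kl_ext :: ('a::finite \<Rightarrow> real) \<Rightarrow> _)"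
  "chi2_bounds_div 1 (kl_ext :: ('a::finite \<Rightarrow> real) \<Rightarrow> _)"
proof -
  show "div_bounds_chi2 1 (kl_ext :: ('a \<Rightarrow> real) \<Rightarrow> _)"
  proof (rule div_bounds_chi2I[OF normalized_generator_kl, of 1])
    fix \<epsilon> :: real assume "0 < \<epsilon>"
    have "gdiv kl_generator 1 q w \<le> (1 + \<epsilon>) * r / 1"
      if "0 < r" "q \<in> distrs" "w \<in> distrs" "kl_ext q w \<le> ereal r" for r and q w :: "'a \<Rightarrow> real"
    proof -
      have ac: "\<And>x. w x = 0 \<Longrightarrow> q x = 0" and "kl q w \<le> r"
        using kl_ext_le_ereal[OF that(2,4)] by auto
      then have "gdiv kl_generator 1 q w \<le> r" using kl_eq_gdiv[OF that(2,3) ac, of 1] by simp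
      moreover have "0 \<le> \<epsilon> * r" using \<open>0 < \<epsilon>\<close> that(1) by simp
      ultimately show ?thesis by (simp add: algebra_simps)
    qed
    then show "\<exists>r0>0. \<forall>r (q::'a \<Rightarrow> real) w. 0 < r \<and> r < r0 \<and> q \<in> distrs \<and> w \<in> distrs \<and>
        kl_ext q w \<le> ereal r \<longrightarrow> gdiv kl_generator 1 q w \<le> (1 + \<epsilon>) * r / 1"
      by (intro exI[of _ 1]) auto
  qed (simp_all add: kl_generator_def)
  show "chi2_bounds_div 1 (kl_ext :: ('a \<Rightarrow> real) \<Rightarrow> _)"
  proof (rule chi2_bounds_divI[OF normalized_generator_kl])
    fix \<epsilon> :: real
    have "kl_ext q w \<le> ereal r"
      if "0 < r" "q \<in> distrs" "w \<in> distrs" and supp: "\<forall>x. 0 < q x \<longleftrightarrow> 0 < w x"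
        and "gdiv kl_generator 0 q w \<le> (1 - \<epsilon>\<^sup>2) * r / 1" for r and q w :: "'a \<Rightarrow> real"
    proof -
      have ac: "\<And>x. w x = 0 \<Longrightarrow> q x = 0" using supp that(2) by (auto simp: distrsD less_le)
      have "0 \<le> \<epsilon>\<^sup>2 * r" using that(1) by simp
      then have "kl q w \<le> r" using kl_eq_gdiv[OF that(2,3) ac, of 0] that(5) by (simp add: algebra_simps)
      then show ?thesis using ac by (auto simp: kl_ext_def)
    qed
    then show "\<exists>r0>0. \<forall>r (q::'a \<Rightarrow> real) w. 0 < r \<and> r < r0 \<and> q \<in> distrs \<and> w \<in> distrs \<and>
        (\<forall>x. 0 < q x \<longleftrightarrow> 0 < w x) \<and> gdiv kl_generator 0 q w \<le> (1 - \<epsilon>\<^sup>2) * r / 1 \<longrightarrow> kl_ext q w \<le> ereal r"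
      by (intro exI[of _ 1]) auto
  qed simp
qed

lemma renyi_div_chi2_bounds_gt_1:
  assumes "1 < \<alpha>"
  shows "div_bounds_chi2 \<alpha> (renyi_div \<alpha> :: ('a::finite \<Rightarrow> real) \<Rightarrow> _)"
    and "chi2_bounds_div \<alpha> (renyi_div \<alpha> :: ('a::finite \<Rightarrow> real) \<Rightarrow> _)"
proof -
  have \<alpha>: "0 < \<alpha>" "\<alpha> \<noteq> 1" using assms by auto
  note G = normalized_generator_renyi[OF \<alpha>]
  have sum_eq: "renyi_sum \<alpha> q w = 1 + \<alpha> * (\<alpha> - 1) * gdiv (renyi_generator \<alpha>) C q w"
    if "q \<in> distrs" "w \<in> distrs" "\<And>x. w x = 0 \<Longrightarrow> q x = 0" for C and q w :: "'a \<Rightarrow> real"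
    using renyi_sum_eq_gdiv[OF \<alpha> that(1,2)] gdiv_indep_slope[OF that(2,3), where C = "1 / (1 - \<alpha>)" and C' = C]
    by simp
  show "div_bounds_chi2 \<alpha> (renyi_div \<alpha> :: ('a \<Rightarrow> real) \<Rightarrow> _)"
  proof (rule div_bounds_chi2I[OF G, of 1])
    fix \<epsilon> :: real assume \<epsilon>: "0 < \<epsilon>" "\<epsilon> < 1"
    have "gdiv (renyi_generator \<alpha>) 1 q w \<le> (1 + \<epsilon>) * r / \<alpha>"
      if r: "0 < r" "r < \<epsilon> / (\<alpha> - 1)" and q: "q \<in> distrs" and w: "w \<in> distrs"
        and d: "renyi_div \<alpha> q w \<le> ereal r" for r and q w :: "'a \<Rightarrow> real"
    proof -
      note le = renyi_div_le_ereal[OF \<alpha>(2) q d]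
      define u where "u = (\<alpha> - 1) * r"
      have u: "0 \<le> u" "u \<le> \<epsilon>" using r assms by (auto simp: u_def field_simps)
      have "ln (renyi_sum \<alpha> q w) \<le> u" using le(2) assms by (simp add: u_def divide_le_eq mult.commute)
      then have "renyi_sum \<alpha> q w \<le> exp u" using le(1) by (metis exp_le_cancel_iff exp_ln)
      also have "\<dots> \<le> 1 + u + u\<^sup>2" using u \<epsilon> by (intro exp_bound) auto
      also have "u\<^sup>2 \<le> \<epsilon> * u" using u by (simp add: power2_eq_square mult_right_mono)
      finally have "renyi_sum \<alpha> q w \<le> 1 + (1 + \<epsilon>) * u" by (simp add: algebra_simps)
      moreover have "(1 + \<epsilon>) * u = (\<alpha> - 1) * ((1 + \<epsilon>) * r)" by (simp add: u_def)
      ultimately have "\<alpha> * (\<alpha> - 1) * gdiv (renyi_generator \<alpha>) 1 q w \<le> (\<alpha> - 1) * ((1 + \<epsilon>) * r)"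
        using sum_eq[OF q w le(3)[OF assms], where C = 1] by linarith
      then have "(\<alpha> - 1) * (\<alpha> * gdiv (renyi_generator \<alpha>) 1 q w) \<le> (\<alpha> - 1) * ((1 + \<epsilon>) * r)"
        by (simp add: mult.assoc mult.left_commute)
      then have "\<alpha> * gdiv (renyi_generator \<alpha>) 1 q w \<le> (1 + \<epsilon>) * r"
        by (rule mult_left_le_imp_le) (use assms in simp)
      then show ?thesis using \<alpha> by (simp add: field_simps)
    qed
    moreover have "0 < \<epsilon> / (\<alpha> - 1)" using \<epsilon> assms by simp
    ultimately show "\<exists>r0>0. \<forall>r (q::'a \<Rightarrow> real) w. 0 < r \<and> r < r0 \<and> q \<in> distrs \<and> w \<in> distrs \<and>
        renyi_div \<alpha> q w \<le> ereal r \<longrightarrow> gdiv (renyi_generator \<alpha>) 1 q w \<le> (1 + \<epsilon>) * r / \<alpha>"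
      by blast
  qed (use \<alpha> in \<open>simp_all add: renyi_generator_0\<close>)
  show "chi2_bounds_div \<alpha> (renyi_div \<alpha> :: ('a \<Rightarrow> real) \<Rightarrow> _)"
  proof (rule chi2_bounds_divI[OF G \<alpha>(1)])
    fix \<epsilon> :: real assume \<epsilon>: "0 < \<epsilon>" "\<epsilon> < 1"
    have "renyi_div \<alpha> q w \<le> ereal r"
      if "0 < r" "q \<in> distrs" "w \<in> distrs" and supp: "\<forall>x. 0 < q x \<longleftrightarrow> 0 < w x"
        and H: "gdiv (renyi_generator \<alpha>) 0 q w \<le> (1 - \<epsilon>\<^sup>2) * r / \<alpha>" for r and q w :: "'a \<Rightarrow> real"
    proof -
      have ac: "\<And>x. w x = 0 \<Longrightarrow> q x = 0" using supp that(2) by (auto simp: distrsD less_le)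
      note pos = renyi_sum_pos[OF that(2) ac that(3), of \<alpha>]
      have "ln (renyi_sum \<alpha> q w) \<le> renyi_sum \<alpha> q w - 1" using pos by (rule ln_le_minus_one)
      also have "\<dots> = (\<alpha> - 1) * (\<alpha> * gdiv (renyi_generator \<alpha>) 0 q w)"
        using sum_eq[OF that(2,3) ac] by (simp add: algebra_simps)
      also have "\<dots> \<le> (\<alpha> - 1) * r"
      proof -
        have "\<alpha> * gdiv (renyi_generator \<alpha>) 0 q w \<le> (1 - \<epsilon>\<^sup>2) * r" using H \<alpha> by (simp add: field_simps)
        also have "\<dots> \<le> r" using that(1) by (simp add: algebra_simps)
        finally show ?thesis using assms by (intro mult_left_mono) auto
      qed
      finally show ?thesis using assms renyi_div_le_ereal_iff[OF \<alpha>(2) that(2) ac pos]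
        by (simp add: divide_le_eq mult.commute)
    qed
    then show "\<exists>r0>0. \<forall>r (q::'a \<Rightarrow> real) w. 0 < r \<and> r < r0 \<and> q \<in> distrs \<and> w \<in> distrs \<and>
        (\<forall>x. 0 < q x \<longleftrightarrow> 0 < w x) \<and> gdiv (renyi_generator \<alpha>) 0 q w \<le> (1 - \<epsilon>\<^sup>2) * r / \<alpha> \<longrightarrow>
        renyi_div \<alpha> q w \<le> ereal r"
      by (intro exI[of _ 1]) auto
  qed
qed

lemma renyi_div_chi2_bounds_lt_1:
  assumes "0 < \<alpha>" "\<alpha> < 1"
  shows "div_bounds_chi2 \<alpha> (renyi_div \<alpha> :: ('a::finite \<Rightarrow> real) \<Rightarrow> _)"
    and "chi2_bounds_div \<alpha> (renyi_div \<alpha> :: ('a::finite \<Rightarrow> real) \<Rightarrow> _)"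
proof -
  have \<alpha>: "0 < \<alpha>" "\<alpha> \<noteq> 1" using assms by auto
  note G = normalized_generator_renyi[OF \<alpha>]
  define H where "H q w = gdiv (renyi_generator \<alpha>) (1 / (1 - \<alpha>)) q w" for q w :: "'a \<Rightarrow> real"
  have sum_eq: "renyi_sum \<alpha> q w = 1 - \<alpha> * (1 - \<alpha>) * H q w" if "q \<in> distrs" "w \<in> distrs" for q w
    using renyi_sum_eq_gdiv[OF \<alpha> that] by (simp add: H_def algebra_simps)
  show "div_bounds_chi2 \<alpha> (renyi_div \<alpha> :: ('a \<Rightarrow> real) \<Rightarrow> _)"
  proof (rule div_bounds_chi2I[OF G, of "1 / (1 - \<alpha>)"])
    fix \<epsilon> :: real assume \<epsilon>: "0 < \<epsilon>"
    have "H q w \<le> (1 + \<epsilon>) * r / \<alpha>"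
      if "0 < r" and q: "q \<in> distrs" and w: "w \<in> distrs" and d: "renyi_div \<alpha> q w \<le> ereal r"
      for r and q w :: "'a \<Rightarrow> real"
    proof -
      note le = renyi_div_le_ereal[OF \<alpha>(2) q d]
      have "(\<alpha> - 1) * r \<le> ln (renyi_sum \<alpha> q w)" using le(2) assms by (simp add: divide_le_eq mult.commute)
      then have "1 + (\<alpha> - 1) * r \<le> renyi_sum \<alpha> q w"
        using le(1) by (metis exp_le_cancel_iff exp_ln exp_ge_add_one_self order_trans)
      then have "(1 - \<alpha>) * (\<alpha> * H q w) \<le> (1 - \<alpha>) * r" using sum_eq[OF q w] by (simp add: algebra_simps)
      then have "\<alpha> * H q w \<le> r" by (rule mult_left_le_imp_le) (use assms in simp)
      also have "r \<le> (1 + \<epsilon>) * r" using \<epsilon> \<open>0 < r\<close> by simp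
      finally show ?thesis using \<alpha> by (simp add: field_simps)
    qed
    then show "\<exists>r0>0. \<forall>r (q::'a \<Rightarrow> real) w. 0 < r \<and> r < r0 \<and> q \<in> distrs \<and> w \<in> distrs \<and>
        renyi_div \<alpha> q w \<le> ereal r \<longrightarrow> gdiv (renyi_generator \<alpha>) (1 / (1 - \<alpha>)) q w \<le> (1 + \<epsilon>) * r / \<alpha>"
      by (intro exI[of _ 1]) (auto simp: H_def)
  qed (use assms in \<open>simp_all add: renyi_generator_0\<close>)
  show "chi2_bounds_div \<alpha> (renyi_div \<alpha> :: ('a \<Rightarrow> real) \<Rightarrow> _)"
  proof (rule chi2_bounds_divI[OF G \<alpha>(1)])
    fix \<epsilon> :: real assume \<epsilon>: "0 < \<epsilon>" "\<epsilon> < 1"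
    have "renyi_div \<alpha> q w \<le> ereal r"
      if r: "0 < r" "r < \<epsilon>\<^sup>2 / (1 - \<alpha>)" and q: "q \<in> distrs" and w: "w \<in> distrs"
        and supp: "\<forall>x. 0 < q x \<longleftrightarrow> 0 < w x"
        and small: "gdiv (renyi_generator \<alpha>) 0 q w \<le> (1 - \<epsilon>\<^sup>2) * r / \<alpha>" for r and q w :: "'a \<Rightarrow> real"
    proof -
      have ac: "\<And>x. w x = 0 \<Longrightarrow> q x = 0" using supp q by (auto simp: distrsD less_le)
      define s where "s = renyi_sum \<alpha> q w"
      define u where "u = (1 - \<alpha>) * r"
      define y where "y = \<alpha> * (1 - \<alpha>) * H q w"
      have s: "0 < s" "s = 1 - y"
        using renyi_sum_pos[OF q ac w, of \<alpha>] sum_eq[OF q w] by (simp_all add: s_def y_def)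
      have u: "0 \<le> u" "u \<le> \<epsilon>\<^sup>2" using r assms by (auto simp: u_def field_simps)
      have "H q w \<le> (1 - \<epsilon>\<^sup>2) * r / \<alpha>"
        using small gdiv_indep_slope[OF w ac, where G = "renyi_generator \<alpha>" and C = 0 and C' = "1 / (1 - \<alpha>)"] by (simp add: H_def)
      then have "\<alpha> * H q w \<le> (1 - \<epsilon>\<^sup>2) * r" using assms by (simp add: field_simps)
      then have "(1 - \<alpha>) * (\<alpha> * H q w) \<le> (1 - \<alpha>) * ((1 - \<epsilon>\<^sup>2) * r)"
        using assms by (intro mult_left_mono) auto
      then have "y \<le> u * (1 - \<epsilon>\<^sup>2)" by (simp add: y_def u_def algebra_simps)
      then have "(1 - u * (1 - \<epsilon>\<^sup>2)) * (1 + u) \<le> s * (1 + u)"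
        using s u by (intro mult_right_mono) auto
      moreover have "1 \<le> (1 - u * (1 - \<epsilon>\<^sup>2)) * (1 + u)"
      proof -
        have "u * (1 - \<epsilon>\<^sup>2) \<le> \<epsilon>\<^sup>2" using u \<epsilon> by (smt (verit) mult_left_le zero_le_power2)
        then have "0 \<le> u * (\<epsilon>\<^sup>2 - u * (1 - \<epsilon>\<^sup>2))" using u by simp
        then show ?thesis by (simp add: algebra_simps)
      qed
      ultimately have "1 / s \<le> 1 + u" using s by (simp add: divide_le_eq mult.commute)
      moreover have "- ln s \<le> 1 / s - 1" using ln_le_minus_one[of "1 / s"] s by (simp add: ln_div)
      ultimately have "(\<alpha> - 1) * r \<le> ln s" by (simp add: u_def algebra_simps)
      then show ?thesis using renyi_div_le_ereal_iff[OF \<alpha>(2) q ac, where r = r] s assms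
        by (simp add: s_def neg_divide_le_eq mult.commute)
    qed
    moreover have "0 < \<epsilon>\<^sup>2 / (1 - \<alpha>)" using \<epsilon> assms by simp
    ultimately show "\<exists>r0>0. \<forall>r (q::'a \<Rightarrow> real) w. 0 < r \<and> r < r0 \<and> q \<in> distrs \<and> w \<in> distrs \<and>
        (\<forall>x. 0 < q x \<longleftrightarrow> 0 < w x) \<and> gdiv (renyi_generator \<alpha>) 0 q w \<le> (1 - \<epsilon>\<^sup>2) * r / \<alpha> \<longrightarrow>
        renyi_div \<alpha> q w \<le> ereal r"
      by blast
  qed
qed

lemma renyi_div_chi2_bounds:
  assumes "0 < \<alpha>"
  shows "div_bounds_chi2 \<alpha> (renyi_div \<alpha> :: ('a::finite \<Rightarrow> real) \<Rightarrow> _)"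
    and "chi2_bounds_div \<alpha> (renyi_div \<alpha> :: ('a::finite \<Rightarrow> real) \<Rightarrow> _)"
  using renyi_div_chi2_bounds_gt_1[of \<alpha>] renyi_div_chi2_bounds_lt_1[OF assms] kl_ext_chi2_bounds
  by (cases rule: linorder_cases[of \<alpha> 1]; simp add: renyi_div_def[abs_def])+

definition tangent_gap :: "(real \<Rightarrow> real) \<Rightarrow> (real \<Rightarrow> real) \<Rightarrow> real \<Rightarrow> real" where
  "tangent_gap f f' t = f t - f' 1 * (t - 1)"

lemma fgenD:
  assumes "fgen f f' f''"
  shows "convex_on {0<..} f" "f 1 = 0" "\<And>t. 0 < t \<Longrightarrow> (f has_real_derivative f' t) (at t)"
    "\<And>t. 0 < t \<Longrightarrow> (f' has_real_derivative f'' t) (at t)"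
  using assms by (auto simp: fgen_def)

lemma convex_on_tangent_gap:
  assumes "fgen f f' f''"
  shows "convex_on {0<..} (tangent_gap f f')"
proof (rule convex_onI)
  fix t x y :: real assume "0 < t" "t < 1" "x \<in> {0<..}" "y \<in> {0<..}"
  then have "f ((1 - t) *\<^sub>R x + t *\<^sub>R y) \<le> (1 - t) * f x + t * f y"
    using convex_onD[OF fgenD(1)[OF assms]] by simp
  then show "tangent_gap f f' ((1 - t) *\<^sub>R x + t *\<^sub>R y)
      \<le> (1 - t) * tangent_gap f f' x + t * tangent_gap f f' y"
    by (simp add: tangent_gap_def algebra_simps)
qed simp

lemma normalized_generator_fgen:
  assumes f: "fgen f f' f''" and "0 < f'' 1"
  shows "normalized_generator (\<lambda>t. tangent_gap f f' t / f'' 1) (\<lambda>t. (f' t - f' 1) / f'' 1)"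
  unfolding normalized_generator_def
proof (intro conjI allI impI)
  show "convex_on {0<..} (\<lambda>t. tangent_gap f f' t / f'' 1)"
    using convex_on_tangent_gap[OF f] \<open>0 < f'' 1\<close> by (intro convex_on_cdiv) auto
  fix t :: real assume "\<bar>t - 1\<bar> < 1/2"
  then have "(f has_real_derivative f' t) (at t)" by (intro fgenD(3)[OF f]) linarith
  then show "((\<lambda>t. tangent_gap f f' t / f'' 1) has_real_derivative (f' t - f' 1) / f'' 1) (at t)"
    unfolding tangent_gap_def[abs_def] using \<open>0 < f'' 1\<close> by (auto intro!: derivative_eq_intros)
next
  have "(f' has_real_derivative f'' 1) (at 1)" by (rule fgenD(4)[OF f]) simp
  then show "((\<lambda>t. (f' t - f' 1) / f'' 1) has_real_derivative 1) (at 1)"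
    using \<open>0 < f'' 1\<close> by (auto intro!: derivative_eq_intros)
qed (use fgenD(2)[OF f] in \<open>simp_all add: tangent_gap_def\<close>)

lemma tangent_gap_pos:
  assumes "fgen f f' f''" "0 < f'' 1" "0 < t" "t \<noteq> 1"
  shows "0 < tangent_gap f f' t"
  using normalized_generator_pos[OF normalized_generator_fgen[OF assms(1,2)] assms(3,4)] assms(2)
  by (simp add: zero_less_divide_iff)

lemma tangent_gap_nonneg:
  assumes "fgen f f' f''" "0 < f'' 1" "0 < t"
  shows "0 \<le> tangent_gap f f' t"
  using tangent_gap_pos[OF assms] fgenD(2)[OF assms(1)]
  by (cases "t = 1") (auto simp: tangent_gap_def)

lemma tangent_gap_antimono:
  assumes f: "fgen f f' f''" and "0 < f'' 1" "0 < s" "s \<le> t" "t \<le> 1"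
  shows "tangent_gap f f' t \<le> tangent_gap f f' s"
proof (cases "s = 1")
  case False
  define m where "m = (1 - t) / (1 - s)"
  have m: "0 \<le> m" "m \<le> 1" "1 + m * (s - 1) = t" using assms False by (auto simp: m_def field_simps)
  have "tangent_gap f f' t \<le> m * tangent_gap f f' s"
    using convex_on_toward_1[OF convex_on_tangent_gap[OF f] _ \<open>0 < s\<close> m(1,2)] m(3)
    by (simp add: tangent_gap_def fgenD(2)[OF f])
  also have "\<dots> \<le> tangent_gap f f' s"
    using m tangent_gap_nonneg[OF f \<open>0 < f'' 1\<close> \<open>0 < s\<close>] by (simp add: mult_left_le_one_le)
  finally show ?thesis .
qed (use assms in simp)

lemma tangent_gap_slope_mono:
  assumes f: "fgen f f' f''" and "1 < s" "s \<le> t"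
  shows "tangent_gap f f' s / (s - 1) \<le> tangent_gap f f' t / (t - 1)"
proof -
  define m where "m = (s - 1) / (t - 1)"
  have m: "0 \<le> m" "m \<le> 1" "1 + m * (t - 1) = s" using assms by (auto simp: m_def field_simps)
  have "tangent_gap f f' s \<le> m * tangent_gap f f' t"
    using convex_on_toward_1[OF convex_on_tangent_gap[OF f] _ _ m(1,2), of t] m(3) assms
    by (simp add: tangent_gap_def fgenD(2)[OF f])
  then show ?thesis using assms by (simp add: m_def field_simps)
qed

lemma f_zero_gt:
  assumes f: "fgen f f' f''" and "0 < f'' 1"
  shows "ereal (- f' 1) < f_zero f"
proof -
  define S where "S = (SUP t\<in>{0<..<1}. ereal (tangent_gap f f' t))"
  have upper: "ereal (tangent_gap f f' t) \<le> S" if "0 < t" "t < 1" for t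
    unfolding S_def using that by (intro SUP_upper) auto
  have "((\<lambda>t. ereal (tangent_gap f f' t)) \<longlongrightarrow> S) (at_right 0)"
  proof (rule increasing_tendsto)
    have "eventually (\<lambda>t. 0 < t \<and> t < (1::real)) (at_right 0)"
      unfolding eventually_at_right_field by (intro exI[of _ 1]) auto
    then show "eventually (\<lambda>t. ereal (tangent_gap f f' t) \<le> S) (at_right 0)"
      by eventually_elim (use upper in auto)
    fix y assume "y < S"
    then obtain t0 where t0: "0 < t0" "t0 < 1" "y < ereal (tangent_gap f f' t0)"
      unfolding S_def less_SUP_iff by auto
    have "eventually (\<lambda>t. 0 < t \<and> t < t0) (at_right (0::real))"
      using t0 unfolding eventually_at_right_field by (intro exI[of _ t0]) auto
    then show "eventually (\<lambda>t. y < ereal (tangent_gap f f' t)) (at_right 0)"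
      by eventually_elim
        (use t0 tangent_gap_antimono[OF f \<open>0 < f'' 1\<close>] in \<open>force intro: order_less_le_trans\<close>)
  qed
  moreover have "((\<lambda>t. f' 1 * (t - 1)) \<longlongrightarrow> f' 1 * (0 - 1)) (at_right (0::real))"
    by (intro tendsto_intros)
  then have "((\<lambda>t. ereal (f' 1 * (t - 1))) \<longlongrightarrow> ereal (- f' 1)) (at_right 0)" by simp
  ultimately have "((\<lambda>t. ereal (tangent_gap f f' t) + ereal (f' 1 * (t - 1))) \<longlongrightarrow> S + ereal (- f' 1)) (at_right 0)"
    by (intro tendsto_add_ereal_general1) auto
  then have "((\<lambda>t. ereal (f t)) \<longlongrightarrow> S + ereal (- f' 1)) (at_right 0)"
    by (simp add: tangent_gap_def)
  then have "f_zero f = S + ereal (- f' 1)" unfolding f_zero_def by (intro tendsto_Lim) auto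
  moreover have "0 < S"
  proof -
    have "0 < ereal (tangent_gap f f' (1/2))" using tangent_gap_pos[OF f \<open>0 < f'' 1\<close>, of "1/2"] by simp
    also have "\<dots> \<le> S" using upper[of "1/2"] by simp
    finally show ?thesis .
  qed
  ultimately show ?thesis by (cases S) auto
qed

lemma f_slope_inf_gt:
  assumes f: "fgen f f' f''" and "0 < f'' 1"
  shows "ereal (f' 1) < f_slope_inf f"
proof -
  define S where "S = (SUP t\<in>{1<..}. ereal (tangent_gap f f' t / (t - 1)))"
  have upper: "ereal (tangent_gap f f' t / (t - 1)) \<le> S" if "1 < t" for t
    unfolding S_def using that by (intro SUP_upper) auto
  have "((\<lambda>t. ereal (tangent_gap f f' t / (t - 1))) \<longlongrightarrow> S) at_top"
  proof (rule increasing_tendsto)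
    show "eventually (\<lambda>t. ereal (tangent_gap f f' t / (t - 1)) \<le> S) at_top"
      using eventually_gt_at_top[of 1] by eventually_elim (use upper in auto)
    fix y assume "y < S"
    then obtain t0 where t0: "1 < t0" "y < ereal (tangent_gap f f' t0 / (t0 - 1))"
      unfolding S_def less_SUP_iff by auto
    show "eventually (\<lambda>t. y < ereal (tangent_gap f f' t / (t - 1))) at_top"
      using eventually_ge_at_top[of t0]
      by eventually_elim (use t0 tangent_gap_slope_mono[OF f t0(1)] in \<open>force intro: order_less_le_trans\<close>)
  qed
  moreover have ratio: "((\<lambda>t::real. (t - 1) / t) \<longlongrightarrow> 1) at_top" by real_asymp
  then have "((\<lambda>t::real. ereal ((t - 1) / t)) \<longlongrightarrow> ereal 1) at_top" by (simp only: lim_ereal)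
  ultimately have "((\<lambda>t. ereal (tangent_gap f f' t / (t - 1)) * ereal ((t - 1) / t)) \<longlongrightarrow> S * ereal 1) at_top"
    by (intro tendsto_mult_ereal) auto
  moreover have "((\<lambda>t. ereal (f' 1 * ((t - 1) / t))) \<longlongrightarrow> ereal (f' 1 * 1)) at_top"
    unfolding lim_ereal by (intro tendsto_intros ratio)
  ultimately have "((\<lambda>t. ereal (tangent_gap f f' t / (t - 1)) * ereal ((t - 1) / t)
      + ereal (f' 1 * ((t - 1) / t))) \<longlongrightarrow> S * ereal 1 + ereal (f' 1 * 1)) at_top"
    by (intro tendsto_add_ereal_general1) auto
  moreover have "eventually (\<lambda>t. ereal (tangent_gap f f' t / (t - 1)) * ereal ((t - 1) / t)
      + ereal (f' 1 * ((t - 1) / t)) = ereal (f t / t)) at_top"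
    using eventually_gt_at_top[of 1] by eventually_elim (simp add: tangent_gap_def field_simps)
  ultimately have "((\<lambda>t. ereal (f t / t)) \<longlongrightarrow> S * ereal 1 + ereal (f' 1 * 1)) at_top"
    by (rule Lim_transform_eventually)
  then have "f_slope_inf f = S + ereal (f' 1)" unfolding f_slope_inf_def by (simp add: tendsto_Lim)
  moreover have "0 < S"
  proof -
    have "0 < ereal (tangent_gap f f' 2 / (2 - 1))" using tangent_gap_pos[OF f \<open>0 < f'' 1\<close>, of 2] by simp
    also have "\<dots> \<le> S" using upper[of 2] by simp
    finally show ?thesis .
  qed
  ultimately show ?thesis by (cases S) auto
qed

lemma fdiv_eq_gdiv:
  fixes f f' f'' :: "real \<Rightarrow> real" and Z C :: real
  defines "G \<equiv> (\<lambda>t. tangent_gap f f' t / f'' 1)(0 := Z)"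
  assumes "0 < f'' 1" and q: "q \<in> distrs" and w: "w \<in> distrs" and fin: "fdiv f q w \<noteq> \<infinity>"
    and zero: "f_zero f \<noteq> \<infinity> \<Longrightarrow> f_zero f = ereal (f'' 1 * Z - f' 1)"
    and slope: "f_slope_inf f \<noteq> \<infinity> \<Longrightarrow> f_slope_inf f = ereal (f'' 1 * C + f' 1)"
  shows "fdiv f q w = ereal (f'' 1 * gdiv G C q w)"
proof -
  define T where "T x = (if 0 < w x then (if 0 < q x then ereal (w x * f (q x / w x)) else ereal (w x) * f_zero f)
      else if q x = 0 then 0 else ereal (q x) * f_slope_inf f)" for x
  have T: "T x = ereal (f' 1 * (q x - w x) + f'' 1 * (if 0 < w x then w x * G (q x / w x) else C * q x))" for x
  proof -
    have "T x \<noteq> \<infinity>" using fin sum_Pinfty[of T UNIV] by (auto simp: fdiv_def T_def[abs_def])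
    moreover have "0 \<le> q x" "0 \<le> w x" using q w by (auto simp: distrsD)
    ultimately show ?thesis using zero slope \<open>0 < f'' 1\<close>
      by (auto simp: T_def G_def tangent_gap_def field_simps less_le split: if_splits)
  qed
  have "fdiv f q w = ereal (f' 1 * (\<Sum>x\<in>UNIV. q x - w x) + f'' 1 * gdiv G C q w)"
    by (simp add: fdiv_def T_def[symmetric] T gdiv_def sum.distrib sum_distrib_left)
  then show ?thesis using sum_diff_distrs_eq_0[OF q w] by simp
qed

lemma fdiv_chi2_bounds:
  assumes f: "fgen f f' f''" and \<alpha>: "0 < f'' 1"
  shows "div_bounds_chi2 (f'' 1) (fdiv f :: ('a::finite \<Rightarrow> real) \<Rightarrow> _)"
    and "chi2_bounds_div (f'' 1) (fdiv f :: ('a::finite \<Rightarrow> real) \<Rightarrow> _)"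
proof -
  define Z where "Z = (if f_zero f = \<infinity> then 1 else (real_of_ereal (f_zero f) + f' 1) / f'' 1)"
  define C where "C = (if f_slope_inf f = \<infinity> then 1 else (real_of_ereal (f_slope_inf f) - f' 1) / f'' 1)"
  have Z: "0 < Z" "f_zero f \<noteq> \<infinity> \<Longrightarrow> f_zero f = ereal (f'' 1 * Z - f' 1)"
    using f_zero_gt[OF f \<alpha>] \<alpha> by (cases "f_zero f"; simp add: Z_def field_simps)+
  have C: "0 < C" "f_slope_inf f \<noteq> \<infinity> \<Longrightarrow> f_slope_inf f = ereal (f'' 1 * C + f' 1)"
    using f_slope_inf_gt[OF f \<alpha>] \<alpha> by (cases "f_slope_inf f"; simp add: C_def field_simps)+
  define G where "G = (\<lambda>t. tangent_gap f f' t / f'' 1)(0 := Z)"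
  note fdiv_eq = fdiv_eq_gdiv[where f = f and f' = f' and f'' = f'' and Z = Z and C = C,
      OF \<alpha> _ _ _ Z(2) C(2), folded G_def]
  show "div_bounds_chi2 (f'' 1) (fdiv f :: ('a \<Rightarrow> real) \<Rightarrow> _)"
  proof (rule div_bounds_chi2I)
    show "normalized_generator G (\<lambda>t. (f' t - f' 1) / f'' 1)"
      unfolding G_def by (rule normalized_generator_fun_upd_0[OF normalized_generator_fgen[OF f \<alpha>]])
    show "0 < G 0" "0 < C" using Z C by (simp_all add: G_def)
    fix \<epsilon> :: real assume "0 < \<epsilon>"
    have "gdiv G C q w \<le> (1 + \<epsilon>) * r / f'' 1"
      if "0 < r" "q \<in> distrs" "w \<in> distrs" "fdiv f q w \<le> ereal r" for r and q w :: "'a \<Rightarrow> real"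
    proof -
      have "fdiv f q w \<noteq> \<infinity>" using that(4) by auto
      then have "f'' 1 * gdiv G C q w \<le> r" using fdiv_eq[OF that(2,3)] that(4) by simp
      also have "r \<le> (1 + \<epsilon>) * r" using \<open>0 < \<epsilon>\<close> \<open>0 < r\<close> by simp
      finally show ?thesis using \<alpha> by (simp add: field_simps)
    qed
    then show "\<exists>r0>0. \<forall>r (q::'a \<Rightarrow> real) w. 0 < r \<and> r < r0 \<and> q \<in> distrs \<and> w \<in> distrs \<and>
        fdiv f q w \<le> ereal r \<longrightarrow> gdiv G C q w \<le> (1 + \<epsilon>) * r / f'' 1"
      by (intro exI[of _ 1]) auto
  qed
  show "chi2_bounds_div (f'' 1) (fdiv f :: ('a \<Rightarrow> real) \<Rightarrow> _)"
  proof (rule chi2_bounds_divI[OF normalized_generator_fgen[OF f \<alpha>] \<alpha>])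
    fix \<epsilon> :: real
    have "fdiv f q w \<le> ereal r"
      if "0 < r" and q: "q \<in> distrs" and w: "w \<in> distrs" and supp: "\<forall>x. 0 < q x \<longleftrightarrow> 0 < w x"
        and small: "gdiv (\<lambda>t. tangent_gap f f' t / f'' 1) 0 q w \<le> (1 - \<epsilon>\<^sup>2) * r / f'' 1"
      for r and q w :: "'a \<Rightarrow> real"
    proof -
      have zero: "q x = 0 \<longleftrightarrow> w x = 0" for x using supp q w by (auto simp: distrsD less_le)
      have "fdiv f q w \<noteq> \<infinity>" using supp zero q by (auto simp: fdiv_def sum_Pinfty distrsD less_le)
      moreover have "gdiv G C q w = gdiv (\<lambda>t. tangent_gap f f' t / f'' 1) 0 q w"
        unfolding gdiv_def using supp zero w by (intro sum.cong) (auto simp: G_def distrsD less_le)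
      ultimately have "fdiv f q w = ereal (f'' 1 * gdiv (\<lambda>t. tangent_gap f f' t / f'' 1) 0 q w)"
        using fdiv_eq[OF q w] by simp
      moreover have "f'' 1 * gdiv (\<lambda>t. tangent_gap f f' t / f'' 1) 0 q w \<le> r"
      proof -
        have "f'' 1 * gdiv (\<lambda>t. tangent_gap f f' t / f'' 1) 0 q w \<le> (1 - \<epsilon>\<^sup>2) * r"
          using small \<alpha> by (simp add: field_simps)
        also have "\<dots> \<le> r" using \<open>0 < r\<close> by (simp add: algebra_simps)
        finally show ?thesis .
      qed
      ultimately show ?thesis by simp
    qed
    then show "\<exists>r0>0. \<forall>r (q::'a \<Rightarrow> real) w. 0 < r \<and> r < r0 \<and> q \<in> distrs \<and> w \<in> distrs \<and>
        (\<forall>x. 0 < q x \<longleftrightarrow> 0 < w x) \<and> gdiv (\<lambda>t. tangent_gap f f' t / f'' 1) 0 q w \<le> (1 - \<epsilon>\<^sup>2) * r / f'' 1 \<longrightarrow>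
        fdiv f q w \<le> ereal r"
      by (intro exI[of _ 1]) auto
  qed
qed

lemma continuous_on_unit_interval_right_0:
  fixes f :: "real \<Rightarrow> real"
  assumes "(f \<longlongrightarrow> f 0) (at_right 0)" "\<And>u. 0 < u \<Longrightarrow> isCont f u"
  shows "continuous_on {0..1} f"
  unfolding continuous_on_eq_continuous_within
proof
  fix u :: real assume "u \<in> {0..1}"
  show "continuous (at u within {0..1}) f"
  proof (cases "u = 0")
    case True
    then show ?thesis using assms(1) by (simp add: continuous_within at_within_Icc_at_right)
  qed (use \<open>u \<in> {0..1}\<close> assms(2) in \<open>auto intro: continuous_at_imp_continuous_within\<close>)
qed

lemma continuous_on_mult_ln_div:
  fixes p :: real
  assumes "0 < p"
  shows "continuous_on {0..1} (\<lambda>u. u * ln (u / p))"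
    and "continuous_on {0..1} (\<lambda>u. u * (ln (u / p))\<^sup>2)"
proof -
  have "((\<lambda>u. u * ln (u / p)) \<longlongrightarrow> 0) (at_right 0)" "((\<lambda>u. u * (ln (u / p))\<^sup>2) \<longlongrightarrow> 0) (at_right 0)"
    using assms by real_asymp+
  moreover have "isCont (\<lambda>u. u * ln (u / p)) u" if "0 < u" for u
    using that assms by (intro continuous_intros) auto
  moreover have "isCont (\<lambda>u. u * (ln (u / p))\<^sup>2) u" if "0 < u" for u
    using that assms by (intro continuous_intros) auto
  ultimately show "continuous_on {0..1} (\<lambda>u. u * ln (u / p))" "continuous_on {0..1} (\<lambda>u. u * (ln (u / p))\<^sup>2)"
    by (auto intro: continuous_on_unit_interval_right_0)
qed

lemma sum_coordinates_uniformly_close: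
  fixes F :: "'a::finite \<Rightarrow> real \<Rightarrow> real"
  assumes cont: "\<And>x. continuous_on {0..1} (F x)" and "0 < e"
  obtains \<delta> where "0 < \<delta>" "\<And>u v. (\<And>x. u x \<in> {0..1}) \<Longrightarrow> (\<And>x. v x \<in> {0..1}) \<Longrightarrow>
      (\<And>x. \<bar>u x - v x\<bar> < \<delta>) \<Longrightarrow> \<bar>(\<Sum>x\<in>UNIV. F x (u x)) - (\<Sum>x\<in>UNIV. F x (v x))\<bar> \<le> e"
proof -
  define e' where "e' = e / CARD('a)"
  have "0 < e'" using \<open>0 < e\<close> by (simp add: e'_def)
  have "\<exists>d>0. \<forall>s\<in>{0..1}. \<forall>t\<in>{0..1}. dist t s < d \<longrightarrow> dist (F x t) (F x s) < e'" for x
    using compact_uniformly_continuous[OF cont[of x]] \<open>0 < e'\<close>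
    unfolding uniformly_continuous_on_def by auto
  then obtain d where d: "\<And>x. 0 < d x"
    and close: "\<And>x s t. s \<in> {0..1} \<Longrightarrow> t \<in> {0..1} \<Longrightarrow> \<bar>t - s\<bar> < d x \<Longrightarrow> \<bar>F x t - F x s\<bar> < e'"
    unfolding dist_real_def by metis
  define \<delta> where "\<delta> = Min (range d)"
  have "0 < \<delta>" using d by (simp add: \<delta>_def)
  moreover have "\<bar>(\<Sum>x\<in>UNIV. F x (u x)) - (\<Sum>x\<in>UNIV. F x (v x))\<bar> \<le> e"
    if "\<And>x. u x \<in> {0..1}" "\<And>x. v x \<in> {0..1}" "\<And>x. \<bar>u x - v x\<bar> < \<delta>" for u v
  proof -
    have "\<bar>F x (u x) - F x (v x)\<bar> \<le> e'" for x
    proof -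
      have "\<delta> \<le> d x" unfolding \<delta>_def by (rule Min_le) auto
      then have "\<bar>u x - v x\<bar> < d x" using that(3)[of x] by linarith
      then show ?thesis using close[of "v x" "u x" x] that(1,2) by fastforce
    qed
    then have "(\<Sum>x\<in>UNIV. \<bar>F x (u x) - F x (v x)\<bar>) \<le> CARD('a) * e'"
      using sum_mono[of UNIV "\<lambda>x. \<bar>F x (u x) - F x (v x)\<bar>" "\<lambda>_. e'"] by simp
    moreover have "\<bar>(\<Sum>x\<in>UNIV. F x (u x)) - (\<Sum>x\<in>UNIV. F x (v x))\<bar> \<le> (\<Sum>x\<in>UNIV. \<bar>F x (u x) - F x (v x)\<bar>)"
      unfolding sum_subtractf[symmetric] by (rule sum_abs)
    ultimately show ?thesis by (simp add: e'_def)
  qed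
  ultimately show ?thesis by (rule that)
qed

lemma var_log_uniformly_continuous:
  fixes P :: "'a::finite \<Rightarrow> real"
  assumes P: "P \<in> distrs" "\<And>x. 0 < P x" and "0 < \<eta>"
  obtains \<delta> where "0 < \<delta>" "\<And>w w'. w \<in> distrs \<Longrightarrow> w' \<in> distrs \<Longrightarrow> (\<And>x. \<bar>w x - w' x\<bar> < \<delta>) \<Longrightarrow>
      \<bar>var_log w P - var_log w' P\<bar> \<le> \<eta>"
proof -
  obtain L where L: "\<And>x. \<bar>ln (P x)\<bar> \<le> L" using finite_fun_bounded[of "\<lambda>x. ln (P x)"] by blast
  have "0 \<le> L" using L[of undefined] by linarith
  obtain \<delta>1 where "0 < \<delta>1" and \<delta>1: "\<And>u v. (\<And>x. u x \<in> {0..1}) \<Longrightarrow> (\<And>x. v x \<in> {0..1}) \<Longrightarrow>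
      (\<And>x. \<bar>u x - v x\<bar> < \<delta>1) \<Longrightarrow>
      \<bar>(\<Sum>x\<in>UNIV. u x * (ln (u x / P x))\<^sup>2) - (\<Sum>x\<in>UNIV. v x * (ln (v x / P x))\<^sup>2)\<bar> \<le> \<eta> / 2"
    using sum_coordinates_uniformly_close[of "\<lambda>x u. u * (ln (u / P x))\<^sup>2" "\<eta> / 2",
        OF continuous_on_mult_ln_div(2)[OF P(2)] half_gt_zero[OF \<open>0 < \<eta>\<close>]] by blast
  have \<eta>2: "0 < \<eta> / (2 * (2 * L + 1))" using \<open>0 < \<eta>\<close> \<open>0 \<le> L\<close> by simp
  obtain \<delta>2 where "0 < \<delta>2" and \<delta>2: "\<And>u v. (\<And>x. u x \<in> {0..1}) \<Longrightarrow> (\<And>x. v x \<in> {0..1}) \<Longrightarrow>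
      (\<And>x. \<bar>u x - v x\<bar> < \<delta>2) \<Longrightarrow>
      \<bar>(\<Sum>x\<in>UNIV. u x * ln (u x / P x)) - (\<Sum>x\<in>UNIV. v x * ln (v x / P x))\<bar> \<le> \<eta> / (2 * (2 * L + 1))"
    using sum_coordinates_uniformly_close[of "\<lambda>x u. u * ln (u / P x)" "\<eta> / (2 * (2 * L + 1))",
        OF continuous_on_mult_ln_div(1)[OF P(2)] \<eta>2] by blast
  have "\<bar>var_log w P - var_log w' P\<bar> \<le> \<eta>"
    if w: "w \<in> distrs" "w' \<in> distrs" and close: "\<And>x. \<bar>w x - w' x\<bar> < min \<delta>1 \<delta>2" for w w'
  proof -
    have unit: "\<And>x. w x \<in> {0..1}" "\<And>x. w' x \<in> {0..1}" using w by (auto simp: distrsD)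
    have k: "0 \<le> kl w P" "kl w P \<le> L" "0 \<le> kl w' P" "kl w' P \<le> L"
      using kl_nonneg[OF _ P] kl_le_of_abs_ln_le[OF _ P(2) L] w by auto
    have diff: "\<bar>kl w P - kl w' P\<bar> \<le> \<eta> / (2 * (2 * L + 1))"
      using \<delta>2[OF unit] close by (simp add: kl_eq_sum)
    have "(kl w P)\<^sup>2 - (kl w' P)\<^sup>2 = (kl w P - kl w' P) * (kl w P + kl w' P)"
      by (simp add: power2_eq_square algebra_simps)
    then have "\<bar>(kl w P)\<^sup>2 - (kl w' P)\<^sup>2\<bar> = \<bar>kl w P - kl w' P\<bar> * (kl w P + kl w' P)"
      using k by (simp add: abs_mult)
    also have "\<dots> \<le> \<eta> / (2 * (2 * L + 1)) * (2 * L)"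
      using diff k by (intro mult_mono) auto
    also have "\<dots> \<le> \<eta> / 2" using \<open>0 < \<eta>\<close> \<open>0 \<le> L\<close> by (simp add: field_simps)
    finally have "\<bar>(kl w P)\<^sup>2 - (kl w' P)\<^sup>2\<bar> \<le> \<eta> / 2" .
    moreover have "\<bar>(\<Sum>x\<in>UNIV. w x * (ln (w x / P x))\<^sup>2) - (\<Sum>x\<in>UNIV. w' x * (ln (w' x / P x))\<^sup>2)\<bar> \<le> \<eta> / 2"
      using \<delta>1[of w w', OF unit] close by simp
    moreover have "var_log w P - var_log w' P = ((\<Sum>x\<in>UNIV. w x * (ln (w x / P x))\<^sup>2)
        - (\<Sum>x\<in>UNIV. w' x * (ln (w' x / P x))\<^sup>2)) - ((kl w P)\<^sup>2 - (kl w' P)\<^sup>2)"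
      by (simp add: var_log_def kl_eq_sum)
    ultimately show ?thesis by linarith
  qed
  then show ?thesis using \<open>0 < \<delta>1\<close> \<open>0 < \<delta>2\<close> by (intro that[of "min \<delta>1 \<delta>2"]) auto
qed

lemma bdd_above_var_log:
  fixes P :: "'a::finite \<Rightarrow> real"
  assumes "\<And>x. 0 < P x"
  shows "bdd_above {var_log Qh P | Qh. Qh \<in> distrs \<and> A Qh}"
proof -
  obtain L where "\<And>x. \<bar>ln (P x)\<bar> \<le> L" using finite_fun_bounded[of "\<lambda>x. ln (P x)"] by blast
  then have "var_log Qh P \<le> CARD('a) * (8 + 2 * L\<^sup>2)" if "Qh \<in> distrs" for Qh
    using var_log_le[of Qh P L] assms that by blast
  then show ?thesis unfolding bdd_above_def by blast
qed

lemma mix_distrs: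
  assumes "P \<in> distrs" "w \<in> distrs" "0 \<le> t" "t \<le> 1"
  shows "(\<lambda>x. (1 - t) * P x + t * w x) \<in> distrs"
  using assms by (simp add: distrs_def sum.distrib sum_distrib_left[symmetric])

lemma kl_mix_le:
  assumes P: "P \<in> distrs" "\<And>x. 0 < P x" and w: "w \<in> distrs" and t: "0 \<le> t" "t \<le> 1"
  shows "kl (\<lambda>x. (1 - t) * P x + t * w x) P \<le> t * kl w P"
proof (cases "t = 1")
  case False
  have "((1 - t) * P x + t * w x) * ln (((1 - t) * P x + t * w x) / P x) \<le> t * (w x * ln (w x / P x))" for x
  proof -
    define z where "z = (1 - t) * P x + t * w x"
    have "0 \<le> w x" using w by (simp add: distrsD)
    moreover have "0 < (1 - t) * P x" using False t P(2)[of x] by simp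
    ultimately have "0 < z" using t by (simp add: z_def add_pos_nonneg)
    have "t * (w x * ln (z / P x) + w x - z) + (1 - t) * (P x * ln (z / P x) + P x - z)
        \<le> t * (w x * ln (w x / P x)) + (1 - t) * (P x * ln (P x / P x))"
      using mult_ln_div_ge_tangent[of "w x" z "P x"] mult_ln_div_ge_tangent[of "P x" z "P x"]
        \<open>0 \<le> w x\<close> \<open>0 < z\<close> P(2)[of x] t
      by (intro add_mono mult_left_mono) auto
    then show ?thesis using P(2)[of x] by (simp add: z_def algebra_simps)
  qed
  then show ?thesis unfolding kl_eq_sum sum_distrib_left by (rule sum_mono)
qed simp

lemma continuous_on_kl_mix:
  assumes P: "P \<in> distrs" "\<And>x. 0 < P x" and w: "w \<in> distrs"
  shows "continuous_on {0..1} (\<lambda>t. kl (\<lambda>x. (1 - t) * P x + t * w x) P)"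
  unfolding kl_eq_sum
proof (intro continuous_on_sum)
  fix x
  have sub: "(\<lambda>t. (1 - t) * P x + t * w x) ` {0..1} \<subseteq> {0..1}"
  proof
    fix y assume "y \<in> (\<lambda>t. (1 - t) * P x + t * w x) ` {0..1}"
    then obtain t where "t \<in> {0..1}" "y = (1 - t) * P x + t * w x" by auto
    then show "y \<in> {0..1}"
    proof -
      have "(\<lambda>x. (1 - t) * P x + t * w x) \<in> distrs" using mix_distrs[of P w t] P(1) w \<open>t \<in> {0..1}\<close> by simp
      then show ?thesis using distrsD(1,3)[of "\<lambda>x. (1 - t) * P x + t * w x" x] \<open>y = (1 - t) * P x + t * w x\<close> by simp
    qed
  qed
  have "continuous_on {0..1} (\<lambda>u. u * ln (u / P x))" by (rule continuous_on_mult_ln_div(1)) (rule P(2))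
  moreover have "continuous_on {0..1} (\<lambda>t. (1 - t) * P x + t * w x)" by (intro continuous_intros)
  ultimately show "continuous_on {0..1} (\<lambda>t. ((1 - t) * P x + t * w x) * ln (((1 - t) * P x + t * w x) / P x))"
    using sub by (rule continuous_on_compose2)
qed

lemma var_log_near_level_set:
  fixes P :: "'a::finite \<Rightarrow> real"
  assumes P: "P \<in> distrs" "\<And>x. 0 < P x" and "0 < \<gamma>" "0 < \<eta>"
  shows "\<exists>\<delta>>0. \<forall>w. w \<in> distrs \<and> \<gamma> \<le> kl w P \<and> kl w P < \<gamma> + \<delta> \<longrightarrow>
           var_log w P \<le> Sup {var_log Qh P | Qh. Qh \<in> distrs \<and> kl Qh P = \<gamma>} + \<eta>"
proof -
  define S where "S = {var_log Qh P | Qh. Qh \<in> distrs \<and> kl Qh P = \<gamma>}"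
  obtain \<delta> where "0 < \<delta>" and uc: "\<And>w w'. w \<in> distrs \<Longrightarrow> w' \<in> distrs \<Longrightarrow> (\<And>x. \<bar>w x - w' x\<bar> < \<delta>) \<Longrightarrow>
      \<bar>var_log w P - var_log w' P\<bar> \<le> \<eta>"
    using var_log_uniformly_continuous[OF P \<open>0 < \<eta>\<close>] by blast
  have "var_log w P \<le> Sup S + \<eta>"
    if w: "w \<in> distrs" and kl_w: "\<gamma> \<le> kl w P" "kl w P < \<gamma> + \<gamma> * \<delta>" for w
  proof -
    define m where "m t = (\<lambda>x. (1 - t) * P x + t * w x)" for t
    have "kl (m 0) P \<le> \<gamma>" "\<gamma> \<le> kl (m 1) P" using kl_self[of P] P(2) kl_w \<open>0 < \<gamma>\<close> by (simp_all add: m_def)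
    then obtain t where t: "0 \<le> t" "t \<le> 1" "kl (m t) P = \<gamma>"
      using IVT'[of "\<lambda>t. kl (m t) P" 0 \<gamma> 1] continuous_on_kl_mix[OF P w] by (auto simp: m_def)
    have "\<gamma> \<le> t * kl w P" using kl_mix_le[OF P w t(1,2)] t(3) by (simp add: m_def)
    also have "\<dots> < t * (\<gamma> + \<gamma> * \<delta>)"
      using kl_w \<open>0 < \<gamma>\<close> t(1) \<open>\<gamma> \<le> t * kl w P\<close> by (cases "t = 0") auto
    finally have "\<gamma> * 1 < \<gamma> * (t * (1 + \<delta>))" by (simp add: algebra_simps)
    then have "1 < t * (1 + \<delta>)" using \<open>0 < \<gamma>\<close> mult_less_cancel_left_pos by blast
    then have "1 - t < t * \<delta>" by (simp add: algebra_simps)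
    also have "t * \<delta> \<le> \<delta>" using t \<open>0 < \<delta>\<close> by (simp add: mult_left_le_one_le)
    finally have "1 - t < \<delta>" .
    have "\<bar>w x - m t x\<bar> < \<delta>" for x
    proof -
      have "w x - m t x = (1 - t) * (w x - P x)" by (simp add: m_def algebra_simps)
      then have "\<bar>w x - m t x\<bar> = (1 - t) * \<bar>w x - P x\<bar>" using t by (simp add: abs_mult)
      also have "\<dots> \<le> (1 - t) * 1"
        using distrsD(1,3)[OF w, of x] distrsD(1,3)[OF P(1), of x] t by (intro mult_left_mono) auto
      finally show ?thesis using \<open>1 - t < \<delta>\<close> by simp
    qed
    then have "var_log w P \<le> var_log (m t) P + \<eta>"
      using uc[OF w mix_distrs[OF P(1) w t(1,2)]] by (simp add: m_def)
    moreover have "var_log (m t) P \<le> Sup S"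
      using t mix_distrs[OF P(1) w t(1,2)] bdd_above_var_log[OF P(2)]
      by (intro cSup_upper) (auto simp: S_def m_def)
    ultimately show ?thesis by linarith
  qed
  then show ?thesis using \<open>0 < \<gamma>\<close> \<open>0 < \<delta>\<close> unfolding S_def by (intro exI[of _ "\<gamma> * \<delta>"]) auto
qed

lemma tilt_summand_pos:
  fixes P0 P1 :: "'a::finite \<Rightarrow> real"
  assumes "\<And>x. 0 < P0 x" "\<And>x. 0 < P1 x"
  shows "0 < P0 a powr (\<mu> / (1 + \<mu>)) * P1 a powr (1 / (1 + \<mu>))"
proof -
  have "0 < P0 a" "0 < P1 a" using assms by blast+
  then have "P0 a \<noteq> 0" "P1 a \<noteq> 0" by auto
  then show ?thesis by simp
qed

lemma tilt_pos:
  fixes P0 P1 :: "'a::finite \<Rightarrow> real"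
  assumes "\<And>x. 0 < P0 x" "\<And>x. 0 < P1 x"
  shows "0 < tilt P0 P1 \<mu> x"
  unfolding tilt_def using tilt_summand_pos[OF assms] by (intro divide_pos_pos sum_pos) auto

lemma tilt_distrs:
  fixes P0 P1 :: "'a::finite \<Rightarrow> real"
  assumes "\<And>x. 0 < P0 x" "\<And>x. 0 < P1 x"
  shows "tilt P0 P1 \<mu> \<in> distrs"
proof -
  have "0 < (\<Sum>a\<in>UNIV. P0 a powr (\<mu> / (1 + \<mu>)) * P1 a powr (1 / (1 + \<mu>)))"
    using tilt_summand_pos[OF assms] by (intro sum_pos) auto
  then show ?thesis using tilt_pos[OF assms]
    by (simp add: distrs_def tilt_def less_imp_le sum_divide_distrib[symmetric])
qed

lemma ln_tilt:
  fixes P0 P1 :: "'a::finite \<Rightarrow> real"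
  assumes "\<And>x. 0 < P0 x" "\<And>x. 0 < P1 x" "0 \<le> \<mu>"
  obtains c where "\<And>x. (1 + \<mu>) * ln (tilt P0 P1 \<mu> x) = \<mu> * ln (P0 x) + ln (P1 x) + c"
proof
  define Z where "Z = (\<Sum>a\<in>UNIV. P0 a powr (\<mu> / (1 + \<mu>)) * P1 a powr (1 / (1 + \<mu>)))"
  have "0 < Z" unfolding Z_def using tilt_summand_pos[OF assms(1,2)] by (intro sum_pos) auto
  fix x
  have "ln (tilt P0 P1 \<mu> x) = \<mu> / (1 + \<mu>) * ln (P0 x) + 1 / (1 + \<mu>) * ln (P1 x) - ln Z"
    using assms(1,2)[of x] \<open>0 < Z\<close> by (simp add: tilt_def Z_def[symmetric] ln_div ln_mult ln_powr)
  then have "(1 + \<mu>) * ln (tilt P0 P1 \<mu> x)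
      = (1 + \<mu>) * (\<mu> / (1 + \<mu>) * ln (P0 x) + 1 / (1 + \<mu>) * ln (P1 x) - ln Z)"
    by simp
  also have "\<dots> = \<mu> * ln (P0 x) + ln (P1 x) + - (1 + \<mu>) * ln Z"
  proof -
    have "(1 + \<mu>) * (\<mu> / (1 + \<mu>)) = \<mu>" "(1 + \<mu>) * (1 / (1 + \<mu>)) = 1" using assms(3) by simp_all
    then show ?thesis by (simp only: right_diff_distrib distrib_left mult.assoc[symmetric])
  qed
  finally show "(1 + \<mu>) * ln (tilt P0 P1 \<mu> x) = \<mu> * ln (P0 x) + ln (P1 x) + - (1 + \<mu>) * ln Z" .
qed

text \<open>The Pythagorean identity for the I-projection of \<open>P1\<close> onto the set \<open>{w. kl w P0 \<le> kl Q P0}\<close>.\<close>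
lemma kl_tilt_pythagoras:
  fixes P0 P1 w :: "'a::finite \<Rightarrow> real" and \<mu> :: real
  defines "Q \<equiv> tilt P0 P1 \<mu>"
  assumes P: "\<And>x. 0 < P0 x" "\<And>x. 0 < P1 x" and "0 \<le> \<mu>" and w: "w \<in> distrs"
  shows "kl w P1 = kl Q P1 + (1 + \<mu>) * kl w Q - \<mu> * (kl w P0 - kl Q P0)"
proof -
  obtain c where c: "\<And>x. (1 + \<mu>) * ln (Q x) = \<mu> * ln (P0 x) + ln (P1 x) + c"
    using ln_tilt[of P0 P1, OF P \<open>0 \<le> \<mu>\<close>] unfolding Q_def by blast
  have Q: "\<And>x. 0 < Q x" "Q \<in> distrs" unfolding Q_def using tilt_pos[of P0 P1, OF P] tilt_distrs[of P0 P1, OF P] by auto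
  have kl_P1: "kl v P1 = (1 + \<mu>) * kl v Q - \<mu> * kl v P0 + c" if v: "v \<in> distrs" for v
  proof -
    have "v x * ln (v x / P1 x) = (1 + \<mu>) * (v x * ln (v x / Q x)) - \<mu> * (v x * ln (v x / P0 x)) + c * v x" for x
      using v c[of x] P(1,2)[of x] Q(1)[of x]
      by (cases "v x = 0") (auto simp: distrsD ln_div less_le algebra_simps)
    then have "kl v P1 = (1 + \<mu>) * kl v Q - \<mu> * kl v P0 + c * (\<Sum>x\<in>UNIV. v x)"
      by (simp add: kl_eq_sum sum.distrib sum_subtractf sum_distrib_left)
    then show ?thesis using v by (simp add: distrsD)
  qed
  show ?thesis using kl_P1[OF w] kl_P1[OF Q(2)] kl_self[of Q] Q(1) by (simp add: algebra_simps)
qed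

lemma kl_ge_kl_tilt_plus:
  fixes P0 P1 :: "'a::finite \<Rightarrow> real"
  assumes P: "\<And>x. 0 < P0 x" "\<And>x. 0 < P1 x" and "0 \<le> \<mu>" and w: "w \<in> distrs"
    and "kl w P0 \<le> kl (tilt P0 P1 \<mu>) P0"
  shows "kl (tilt P0 P1 \<mu>) P1 + kl w (tilt P0 P1 \<mu>) \<le> kl w P1"
proof -
  have "0 \<le> kl w (tilt P0 P1 \<mu>)" using kl_nonneg[OF w tilt_distrs[of P0 P1, OF P]] tilt_pos[of P0 P1, OF P] by blast
  then have "0 \<le> \<mu> * kl w (tilt P0 P1 \<mu>)" using \<open>0 \<le> \<mu>\<close> by simp
  moreover have "0 \<le> \<mu> * (kl (tilt P0 P1 \<mu>) P0 - kl w P0)" using assms(3,5) by simp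
  moreover have "kl w P1 = kl (tilt P0 P1 \<mu>) P1 + (1 + \<mu>) * kl w (tilt P0 P1 \<mu>)
      - \<mu> * (kl w P0 - kl (tilt P0 P1 \<mu>) P0)"
    using kl_tilt_pythagoras[of P0 P1 \<mu> w] P \<open>0 \<le> \<mu>\<close> w by blast
  ultimately show ?thesis by (simp add: algebra_simps)
qed

lemma var_log_near_tilt:
  fixes P0 P1 :: "'a::finite \<Rightarrow> real" and \<mu> :: real
  defines "Q \<equiv> tilt P0 P1 \<mu>"
  assumes P: "\<And>x. 0 < P0 x" "\<And>x. 0 < P1 x" and "P1 \<in> distrs" "0 \<le> \<mu>" "0 < \<eta>"
  shows "\<exists>\<delta>>0. \<forall>w. w \<in> distrs \<and> kl w P0 \<le> kl Q P0 \<and> kl w P1 < kl Q P1 + \<delta> \<longrightarrow>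
           var_log w P1 \<le> var_log Q P1 + \<eta>"
proof -
  obtain \<delta> where "0 < \<delta>" and uc: "\<And>w w'. w \<in> distrs \<Longrightarrow> w' \<in> distrs \<Longrightarrow> (\<And>x. \<bar>w x - w' x\<bar> < \<delta>) \<Longrightarrow>
      \<bar>var_log w P1 - var_log w' P1\<bar> \<le> \<eta>"
    using var_log_uniformly_continuous[of P1 \<eta>] assms(4,6) P(2) by blast
  have Q: "Q \<in> distrs" "\<And>x. 0 < Q x" unfolding Q_def using tilt_distrs[of P0 P1, OF P] tilt_pos[of P0 P1, OF P] by auto
  have "var_log w P1 \<le> var_log Q P1 + \<eta>"
    if w: "w \<in> distrs" and "kl w P0 \<le> kl Q P0" "kl w P1 < kl Q P1 + \<delta>\<^sup>2 / 4" for w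
  proof -
    have "kl Q P1 + kl w Q \<le> kl w P1"
      using kl_ge_kl_tilt_plus[of P0 P1 \<mu> w] P \<open>0 \<le> \<mu>\<close> w that(2) by (simp add: Q_def)
    then have "kl w Q < \<delta>\<^sup>2 / 4" using that(3) by simp
    have "\<bar>w x - Q x\<bar> < \<delta>" for x
    proof -
      have "(w x - Q x)\<^sup>2 \<le> (\<Sum>y\<in>UNIV. (w y - Q y)\<^sup>2)" by (rule member_le_sum) auto
      also have "\<dots> \<le> 4 * kl w Q" using sum_sq_diff_le_kl[OF w Q(1)] Q(2) by blast
      also have "\<dots> < \<delta>\<^sup>2" using \<open>kl w Q < \<delta>\<^sup>2 / 4\<close> by simp
      finally show ?thesis using power2_less_imp_less[of "\<bar>w x - Q x\<bar>" \<delta>] \<open>0 < \<delta>\<close> by simp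
    qed
    then show ?thesis using uc[OF w Q(1)] by (simp add: abs_le_iff)
  qed
  then show ?thesis using \<open>0 < \<delta>\<close> by (intro exI[of _ "\<delta>\<^sup>2 / 4"]) auto
qed

lemma eventually_at_right_0_witness:
  assumes "eventually P (at_right (0::real))"
  shows "\<exists>\<epsilon>. 0 < \<epsilon> \<and> \<epsilon> < 1 \<and> P \<epsilon>"
proof -
  have "eventually (\<lambda>\<epsilon>. 0 < \<epsilon> \<and> \<epsilon> < (1::real)) (at_right 0)"
    unfolding eventually_at_right_field by (intro exI[of _ 1]) auto
  with assms have "eventually (\<lambda>\<epsilon>. 0 < \<epsilon> \<and> \<epsilon> < 1 \<and> P \<epsilon>) (at_right (0::real))"
    by eventually_elim auto
  then show ?thesis using eventually_happens'[of "at_right (0::real)"] by auto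
qed

lemma kl_lower_bound_of_div_bounds_chi2:
  fixes P :: "'a::finite \<Rightarrow> real" and d :: "('a \<Rightarrow> real) \<Rightarrow> ('a \<Rightarrow> real) \<Rightarrow> ereal"
  assumes P: "P \<in> distrs" "\<And>x. 0 < P x" and d: "div_bounds_chi2 \<alpha> d"
    and "0 < \<alpha>" "0 < \<epsilon>" "\<epsilon> < 1"
  obtains K where "\<forall>\<^sub>F r in at_right 0. \<forall>q w. q \<in> distrs \<and> w \<in> distrs \<and> d q w \<le> ereal r \<longrightarrow>
      kl w P - sqrt (r * (2 * (1 + \<epsilon>) * var_log w P / (\<alpha> * (1 - \<epsilon>)))) - K * (r + r powr (3/4)) \<le> kl q P"
proof -
  obtain \<kappa> c r0 where \<kappa>: "0 < \<kappa>" "\<kappa> < 1" and "0 < c" "0 < r0"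
    and bound: "\<forall>r q w. 0 < r \<and> r < r0 \<and> q \<in> distrs \<and> w \<in> distrs \<and> d q w \<le> ereal r \<longrightarrow>
        (1 - \<epsilon>) / 2 * (\<Sum>x\<in>near_set \<kappa> q w. (q x - w x)\<^sup>2 / w x)
          + c * (\<Sum>x\<in>- near_set \<kappa> q w. \<bar>q x - w x\<bar>) \<le> (1 + \<epsilon>) * r / \<alpha>"
    using d \<open>0 < \<epsilon>\<close> \<open>\<epsilon> < 1\<close> unfolding div_bounds_chi2_def by blast
  obtain L where L: "\<And>x. \<bar>ln (P x)\<bar> \<le> L" using finite_fun_bounded[of "\<lambda>x. ln (P x)"] by blast
  define C where "C = (1 + \<epsilon>) / (\<alpha> * c)"
  define K1 where "K1 = (2 * L + 1) * C"
  define K2 where "K2 = 4 * CARD('a) * ((1 + 1 / \<kappa>) * C) powr (3/4)"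
  have "0 < C" using \<open>0 < \<epsilon>\<close> \<open>0 < \<alpha>\<close> \<open>0 < c\<close> by (simp add: C_def)
  have "kl w P - sqrt (r * (2 * (1 + \<epsilon>) * var_log w P / (\<alpha> * (1 - \<epsilon>)))) - max K1 K2 * (r + r powr (3/4))
      \<le> kl q P" if "0 < r" "r < r0" "q \<in> distrs" "w \<in> distrs" "d q w \<le> ereal r" for r q w
  proof -
    define X where "X = 2 * (1 + \<epsilon>) * r / (\<alpha> * (1 - \<epsilon>))"
    have B: "(1 - \<epsilon>) / 2 * (\<Sum>x\<in>near_set \<kappa> q w. (q x - w x)\<^sup>2 / w x)
        + c * (\<Sum>x\<in>- near_set \<kappa> q w. \<bar>q x - w x\<bar>) \<le> (1 + \<epsilon>) * r / \<alpha>"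
      using bound that by blast
    define a where "a = (\<Sum>x\<in>near_set \<kappa> q w. (q x - w x)\<^sup>2 / w x)"
    define b where "b = (\<Sum>x\<in>- near_set \<kappa> q w. \<bar>q x - w x\<bar>)"
    have "0 \<le> a" unfolding a_def by (intro sum_nonneg) (simp add: near_set_def)
    have "0 \<le> b" unfolding b_def by (intro sum_nonneg) simp
    have "0 \<le> c * b" "0 \<le> (1 - \<epsilon>) / 2 * a" using \<open>0 \<le> a\<close> \<open>0 \<le> b\<close> \<open>0 < c\<close> \<open>\<epsilon> < 1\<close> by simp_all
    then have "(1 - \<epsilon>) / 2 * a \<le> (1 + \<epsilon>) * r / \<alpha>" "c * b \<le> (1 + \<epsilon>) * r / \<alpha>"
      using B[folded a_def b_def] by linarith+
    then have "a * ((1 - \<epsilon>) / 2) \<le> (1 + \<epsilon>) * r / \<alpha>" "b * c \<le> (1 + \<epsilon>) * r / \<alpha>"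
      by (simp_all add: mult.commute)
    then have chi: "a \<le> X" and tv: "b \<le> C * r"
      using pos_le_divide_eq[of "(1 - \<epsilon>) / 2" a "(1 + \<epsilon>) * r / \<alpha>"] \<open>\<epsilon> < 1\<close>
      pos_le_divide_eq[of c b "(1 + \<epsilon>) * r / \<alpha>"] \<open>0 < c\<close>
      by (simp_all add: X_def C_def field_simps)
    have "kl w P - sqrt (X * var_log w P) - (2 * L + 1) * (C * r)
        - 4 * CARD('a) * ((1 + 1 / \<kappa>) * (C * r)) powr (3/4) \<le> kl q P"
      using kl_ge_near_far[where P = P and L = L and q = q and w = w, OF P(1) _ L that(3,4) \<kappa> chi[unfolded a_def] tv[unfolded b_def]] P(2)
      by blast
    moreover have "X * var_log w P = r * (2 * (1 + \<epsilon>) * var_log w P / (\<alpha> * (1 - \<epsilon>)))"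
      by (simp add: X_def)
    moreover have "4 * CARD('a) * ((1 + 1 / \<kappa>) * (C * r)) powr (3/4) = K2 * r powr (3/4)"
      using \<open>0 < C\<close> \<open>0 < r\<close> \<kappa> by (simp add: K2_def powr_mult mult.assoc)
    moreover have "K1 * r + K2 * r powr (3/4) \<le> max K1 K2 * (r + r powr (3/4))"
      using \<open>0 < r\<close> by (simp add: distrib_left add_mono mult_right_mono)
    ultimately show ?thesis by (simp add: K1_def algebra_simps)
  qed
  moreover have "\<forall>\<^sub>F r in at_right 0. 0 < r \<and> r < r0"
    using \<open>0 < r0\<close> unfolding eventually_at_right_field by (intro exI[of _ r0]) auto
  ultimately show ?thesis by (intro that[of "max K1 K2"]) (auto elim: eventually_mono)
qed

lemma kl_upper_bound_of_chi2_bounds_div: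
  fixes P w :: "'a::finite \<Rightarrow> real" and d :: "('a \<Rightarrow> real) \<Rightarrow> ('a \<Rightarrow> real) \<Rightarrow> ereal"
  assumes P: "\<And>x. 0 < P x" and d: "chi2_bounds_div \<alpha> d" and "0 < \<alpha>" "0 < \<epsilon>" "\<epsilon> < 1"
    and w: "w \<in> distrs"
  shows "\<forall>\<^sub>F r in at_right 0. \<exists>q. q \<in> distrs \<and> d q w \<le> ereal r \<and>
           kl q P \<le> kl w P - sqrt (r * (2 * (1 - \<epsilon>) * var_log w P / \<alpha>)) + 2 * r / \<alpha>"
proof -
  obtain \<kappa> r0 where "0 < \<kappa>" "0 < r0"
    and r0: "\<forall>r q w. 0 < r \<and> r < r0 \<and> q \<in> distrs \<and> w \<in> distrs \<and> (\<forall>x. \<bar>q x - w x\<bar> \<le> \<kappa> * w x) \<and>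
        chi2 q w \<le> 2 * (1 - \<epsilon>) * r / \<alpha> \<longrightarrow> d q w \<le> ereal r"
    using d \<open>0 < \<epsilon>\<close> \<open>\<epsilon> < 1\<close> unfolding chi2_bounds_div_def by blast
  define V where "V = var_log w P"
  define g where "g x = ln (w x / P x) - kl w P" for x
  obtain B where B: "\<And>x. \<bar>g x\<bar> \<le> B" using finite_fun_bounded[of g] by blast
  define s where "s r = - sqrt (r * (2 * (1 - \<epsilon>) * V / \<alpha>)) / V" for r
  have "(s \<longlongrightarrow> 0) (at_right 0)"
  proof (cases "V = 0")
    case False
    have "((\<lambda>r. - sqrt (r * (2 * (1 - \<epsilon>) * V / \<alpha>)) / V) \<longlongrightarrow> - sqrt (0 * (2 * (1 - \<epsilon>) * V / \<alpha>)) / V)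
        (at_right 0)"
      using False by (intro tendsto_intros) auto
    then show ?thesis by (simp add: s_def[abs_def])
  qed (simp add: s_def[abs_def])
  then have "((\<lambda>r. s r * B) \<longlongrightarrow> 0 * B) (at_right 0)" by (intro tendsto_intros)
  then have "\<forall>\<^sub>F r in at_right 0. dist (s r * B) (0 * B) < min (1/2) \<kappa>"
    using \<open>0 < \<kappa>\<close> by (intro tendstoD) auto
  then have "\<forall>\<^sub>F r in at_right 0. \<bar>s r * B\<bar> < min (1/2) \<kappa>"
    by (simp add: dist_real_def)
  moreover have "\<forall>\<^sub>F r in at_right 0. 0 < r \<and> r < r0"
    using \<open>0 < r0\<close> unfolding eventually_at_right_field by (intro exI[of _ r0]) auto
  ultimately show ?thesis
  proof eventually_elim
    case (elim r)
    define q where "q x = w x * (1 + s r * (ln (w x / P x) - kl w P))" for x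
    have small: "\<bar>s r * g x\<bar> \<le> min (1/2) \<kappa>" for x
    proof -
      have "\<bar>s r * g x\<bar> \<le> \<bar>s r\<bar> * B" using B[of x] by (simp add: abs_mult mult_left_mono)
      also have "\<dots> \<le> \<bar>s r * B\<bar>" by (simp add: abs_mult mult_left_mono)
      finally show ?thesis using elim by linarith
    qed
    note pert = kl_score_perturbation[of w P "s r", folded q_def[abs_def], OF w P]
    have V: "0 \<le> V" using var_log_nonneg[OF w] by (simp add: V_def)
    have sV: "s r * V = - sqrt (r * (2 * (1 - \<epsilon>) * var_log w P / \<alpha>))"
      by (cases "V = 0") (simp_all add: s_def V_def)
    have s2V: "(s r)\<^sup>2 * V \<le> 2 * (1 - \<epsilon>) * r / \<alpha>"
    proof (cases "V = 0")
      case False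
      then have "(s r)\<^sup>2 * V = r * (2 * (1 - \<epsilon>) * V / \<alpha>) / V"
        using V elim \<open>\<epsilon> < 1\<close> \<open>0 < \<alpha>\<close> by (simp add: s_def power_divide power2_eq_square)
      then show ?thesis using False by (simp add: mult.commute)
    qed (use elim \<open>\<epsilon> < 1\<close> \<open>0 < \<alpha>\<close> in simp)
    have q: "q \<in> distrs" "chi2 q w \<le> 2 * (1 - \<epsilon>) * r / \<alpha>"
      "kl q P \<le> kl w P + s r * V + (s r)\<^sup>2 * V"
      using pert small s2V by (auto simp: g_def V_def)
    have "\<bar>q x - w x\<bar> \<le> \<kappa> * w x" for x
    proof -
      have "\<bar>q x - w x\<bar> = \<bar>s r * g x\<bar> * w x" using pert(2)[of x] small by (simp add: q_def g_def)
      also have "\<dots> \<le> \<kappa> * w x" using small[of x] w by (intro mult_right_mono) (auto simp: distrsD)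
      finally show ?thesis .
    qed
    then have "d q w \<le> ereal r" using elim q w by (intro r0[rule_format]) auto
    moreover have "2 * (1 - \<epsilon>) * r / \<alpha> \<le> 2 * r / \<alpha>"
      using \<open>0 < \<epsilon>\<close> elim \<open>0 < \<alpha>\<close> by (intro divide_right_mono) auto
    then have "kl q P \<le> kl w P - sqrt (r * (2 * (1 - \<epsilon>) * var_log w P / \<alpha>)) + 2 * r / \<alpha>"
      using q(3) sV s2V by linarith
    ultimately show ?case using q(1) by blast
  qed
qed

lemma tampered_kl_lower_bound:
  fixes P :: "'a::finite \<Rightarrow> real" and A :: "('a \<Rightarrow> real) \<Rightarrow> bool"
    and d :: "('a \<Rightarrow> real) \<Rightarrow> ('a \<Rightarrow> real) \<Rightarrow> ereal"
  assumes P: "P \<in> distrs" "\<And>x. 0 < P x" and d: "div_bounds_chi2 \<alpha> d" and "0 < \<alpha>" "0 \<le> V"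
    and above: "\<And>w. w \<in> distrs \<Longrightarrow> A w \<Longrightarrow> E \<le> kl w P"
    and near: "\<And>\<eta>. 0 < \<eta> \<Longrightarrow> \<exists>\<delta>>0. \<forall>w. w \<in> distrs \<and> A w \<and> kl w P < E + \<delta> \<longrightarrow> var_log w P \<le> V + \<eta>"
    and "0 < e"
  shows "\<forall>\<^sub>F r in at_right 0. \<forall>Q Qh. Qh \<in> distrs \<and> Q \<in> distrs \<and> A Qh \<and> d Q Qh \<le> ereal r \<longrightarrow>
           E - sqrt (r * (2 / \<alpha> * V)) - e * sqrt r \<le> kl Q P"
proof -
  define \<theta> where "\<theta> = 2 / \<alpha> * V"
  define F where "F \<epsilon> = 2 * (1 + \<epsilon>) * (V + \<epsilon>) / (\<alpha> * (1 - \<epsilon>))" for \<epsilon>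
  have "(F \<longlongrightarrow> 2 * (1 + 0) * (V + 0) / (\<alpha> * (1 - 0))) (at_right 0)"
    unfolding F_def[abs_def] using \<open>0 < \<alpha>\<close> by (intro tendsto_intros) auto
  moreover have "2 * (1 + 0) * (V + 0) / (\<alpha> * (1 - 0)) < (sqrt \<theta> + e / 2)\<^sup>2"
    using \<open>0 < e\<close> \<open>0 \<le> V\<close> \<open>0 < \<alpha>\<close> by (simp add: \<theta>_def power2_sum add_pos_nonneg)
  ultimately obtain \<epsilon> where \<epsilon>: "0 < \<epsilon>" "\<epsilon> < 1" "F \<epsilon> < (sqrt \<theta> + e / 2)\<^sup>2"
    using eventually_at_right_0_witness[OF order_tendstoD(2)] by blast
  obtain K where low: "\<forall>\<^sub>F r in at_right 0. \<forall>q w. q \<in> distrs \<and> w \<in> distrs \<and> d q w \<le> ereal r \<longrightarrow>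
      kl w P - sqrt (r * (2 * (1 + \<epsilon>) * var_log w P / (\<alpha> * (1 - \<epsilon>)))) - K * (r + r powr (3/4)) \<le> kl q P"
    using kl_lower_bound_of_div_bounds_chi2[where P = P, OF P d \<open>0 < \<alpha>\<close> \<epsilon>(1,2)] by blast
  obtain \<delta> where "0 < \<delta>" and \<delta>: "\<And>w. w \<in> distrs \<Longrightarrow> A w \<Longrightarrow> kl w P < E + \<delta> \<Longrightarrow> var_log w P \<le> V + \<epsilon>"
    using near[OF \<epsilon>(1)] by blast
  obtain L where "\<And>x. \<bar>ln (P x)\<bar> \<le> L" using finite_fun_bounded[of "\<lambda>x. ln (P x)"] by blast
  then have B: "\<And>w. w \<in> distrs \<Longrightarrow> var_log w P \<le> CARD('a) * (8 + 2 * L\<^sup>2)"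
    using var_log_le[where P = P] P(2) by blast
  define cB where "cB = 2 * (1 + \<epsilon>) * (CARD('a) * (8 + 2 * L\<^sup>2)) / (\<alpha> * (1 - \<epsilon>))"
  have pos: "\<forall>\<^sub>F r in at_right 0. (0::real) < r" by (simp add: eventually_at_right_less)
  have "(\<lambda>r. K * (r + r powr (3/4))) \<in> o[at_right 0](\<lambda>r. sqrt r)" by real_asymp
  from landau_o.smallD[OF this half_gt_zero[OF \<open>0 < e\<close>]] pos
  have small: "\<forall>\<^sub>F r in at_right 0. K * (r + r powr (3/4)) \<le> e / 2 * sqrt r"
    by eventually_elim (auto dest: order_trans[OF abs_ge_self])
  have "((\<lambda>r. sqrt (r * cB) + K * (r + r powr (3/4))) \<longlongrightarrow> sqrt (0 * cB) + K * (0 + 0)) (at_right 0)"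
    by (intro tendsto_intros tendsto_ident_at) real_asymp
  then have far: "\<forall>\<^sub>F r in at_right 0. sqrt (r * cB) + K * (r + r powr (3/4)) < \<delta>"
    using \<open>0 < \<delta>\<close> by (auto dest: order_tendstoD(2))
  show ?thesis using low small far pos
  proof eventually_elim
    case (elim r)
    show ?case
    proof (intro allI impI)
      fix Q Qh assume QQh: "Qh \<in> distrs \<and> Q \<in> distrs \<and> A Qh \<and> d Q Qh \<le> ereal r"
      define c where "c = 2 * (1 + \<epsilon>) * var_log Qh P / (\<alpha> * (1 - \<epsilon>))"
      have lowQ: "kl Qh P - sqrt (r * c) - K * (r + r powr (3/4)) \<le> kl Q P"
        using elim QQh by (simp add: c_def)
      have nonneg: "0 \<le> sqrt (r * (2 / \<alpha> * V))" "0 \<le> e * sqrt r"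
        using elim \<open>0 < e\<close> \<open>0 \<le> V\<close> \<open>0 < \<alpha>\<close> by simp_all
      show "E - sqrt (r * (2 / \<alpha> * V)) - e * sqrt r \<le> kl Q P"
      proof (cases "kl Qh P < E + \<delta>")
        case False
        have "c \<le> cB" unfolding c_def cB_def
          using B QQh \<epsilon> \<open>0 < \<alpha>\<close> by (intro divide_right_mono mult_left_mono) auto
        then have "sqrt (r * c) \<le> sqrt (r * cB)" using elim by (intro real_sqrt_le_mono mult_left_mono) auto
        then show ?thesis using lowQ False elim nonneg by linarith
      next
        case True
        then have "c \<le> F \<epsilon>" unfolding c_def F_def
          using \<delta> QQh \<epsilon> \<open>0 < \<alpha>\<close> by (intro divide_right_mono mult_left_mono) auto
        then have "sqrt (r * c) \<le> sqrt (r * (sqrt \<theta> + e / 2)\<^sup>2)"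
          using \<epsilon>(3) elim by (intro real_sqrt_le_mono mult_left_mono) auto
        also have "\<dots> = sqrt r * (sqrt \<theta> + e / 2)"
          using \<open>0 < e\<close> \<open>0 \<le> V\<close> \<open>0 < \<alpha>\<close> by (simp add: real_sqrt_mult \<theta>_def)
        also have "\<dots> = sqrt (r * \<theta>) + e / 2 * sqrt r" by (simp add: real_sqrt_mult algebra_simps)
        finally show ?thesis using lowQ above[of Qh] QQh elim by (simp add: \<theta>_def)
      qed
    qed
  qed
qed

lemma tampered_kl_upper_bound:
  fixes P :: "'a::finite \<Rightarrow> real" and A :: "('a \<Rightarrow> real) \<Rightarrow> bool"
    and d :: "('a \<Rightarrow> real) \<Rightarrow> ('a \<Rightarrow> real) \<Rightarrow> ereal"
  assumes P: "\<And>x. 0 < P x" and d: "chi2_bounds_div \<alpha> d" and "0 < \<alpha>" "0 \<le> V"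
    and witness: "\<And>\<eta>. 0 < \<eta> \<Longrightarrow> \<exists>w. w \<in> distrs \<and> A w \<and> kl w P \<le> E \<and> V - \<eta> \<le> var_log w P"
    and "0 < e"
  shows "\<forall>\<^sub>F r in at_right 0. \<exists>Q Qh. Qh \<in> distrs \<and> Q \<in> distrs \<and> A Qh \<and> d Q Qh \<le> ereal r \<and>
           kl Q P \<le> E - sqrt (r * (2 / \<alpha> * V)) + e * sqrt r"
proof -
  define \<theta> where "\<theta> = 2 / \<alpha> * V"
  define F where "F \<epsilon> = sqrt (2 * (1 - \<epsilon>) * (V - \<epsilon>) / \<alpha>)" for \<epsilon>
  have "(F \<longlongrightarrow> sqrt (2 * (1 - 0) * (V - 0) / \<alpha>)) (at_right 0)"
    unfolding F_def[abs_def] using \<open>0 < \<alpha>\<close> by (intro tendsto_intros) auto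
  moreover have "sqrt \<theta> - e / 2 < sqrt (2 * (1 - 0) * (V - 0) / \<alpha>)" using \<open>0 < e\<close> by (simp add: \<theta>_def)
  ultimately obtain \<epsilon> where \<epsilon>: "0 < \<epsilon>" "\<epsilon> < 1" "sqrt \<theta> - e / 2 < F \<epsilon>"
    using eventually_at_right_0_witness[OF order_tendstoD(1)] by blast
  obtain w where w: "w \<in> distrs" "A w" "kl w P \<le> E" "V - \<epsilon> \<le> var_log w P"
    using witness[OF \<epsilon>(1)] by blast
  have pos: "\<forall>\<^sub>F r in at_right 0. (0::real) < r" by (simp add: eventually_at_right_less)
  have "(\<lambda>r. K * r) \<in> o[at_right 0](\<lambda>r. sqrt r)" for K :: real by real_asymp
  from landau_o.smallD[OF this[of "2 / \<alpha>"] half_gt_zero[OF \<open>0 < e\<close>]] pos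
  have small: "\<forall>\<^sub>F r in at_right 0. 2 * r / \<alpha> \<le> e / 2 * sqrt r"
    by eventually_elim (use \<open>0 < \<alpha>\<close> in auto)
  show ?thesis
    using kl_upper_bound_of_chi2_bounds_div[where P = P and w = w, OF P d \<open>0 < \<alpha>\<close> \<epsilon>(1,2) w(1)] small pos
  proof eventually_elim
    case (elim r)
    then obtain q where q: "q \<in> distrs" "d q w \<le> ereal r"
      "kl q P \<le> kl w P - sqrt (r * (2 * (1 - \<epsilon>) * var_log w P / \<alpha>)) + 2 * r / \<alpha>" by blast
    have "sqrt (r * \<theta>) - e / 2 * sqrt r = sqrt r * (sqrt \<theta> - e / 2)"
      by (simp add: real_sqrt_mult algebra_simps)
    also have "\<dots> \<le> sqrt r * F \<epsilon>" using \<epsilon>(3) elim by (intro mult_left_mono) auto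
    also have "\<dots> = sqrt (r * (2 * (1 - \<epsilon>) * (V - \<epsilon>) / \<alpha>))"
      unfolding F_def by (rule real_sqrt_mult[symmetric])
    also have "\<dots> \<le> sqrt (r * (2 * (1 - \<epsilon>) * var_log w P / \<alpha>))"
      using w(4) \<epsilon> elim \<open>0 < \<alpha>\<close> by (intro real_sqrt_le_mono mult_left_mono divide_right_mono) auto
    finally have "kl q P \<le> E - sqrt (r * (2 / \<alpha> * V)) + e * sqrt r"
      using q(3) w(3) elim by (simp add: \<theta>_def)
    then show ?case using q(1,2) w(1,2) by blast
  qed
qed

lemma Inf_minus_in_smallo:
  fixes S :: "'b \<Rightarrow> real set" and f g :: "'b \<Rightarrow> real"
  assumes lower: "\<And>c. 0 < c \<Longrightarrow> \<forall>\<^sub>F r in F. \<forall>a\<in>S r. f r - c * g r \<le> a"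
    and upper: "\<And>c. 0 < c \<Longrightarrow> \<forall>\<^sub>F r in F. \<exists>a\<in>S r. a \<le> f r + c * g r"
  shows "(\<lambda>r. Inf (S r) - f r) \<in> o[F](g)"
proof (rule landau_o.smallI)
  fix c :: real assume "0 < c"
  show "\<forall>\<^sub>F r in F. norm (Inf (S r) - f r) \<le> c * norm (g r)"
    using lower[OF \<open>0 < c\<close>] upper[OF \<open>0 < c\<close>]
  proof eventually_elim
    case (elim r)
    then obtain a where a: "a \<in> S r" "a \<le> f r + c * g r" by blast
    have "bdd_below (S r)" using elim unfolding bdd_below_def by blast
    then have "Inf (S r) \<le> a" using a(1) by (intro cInf_lower)
    moreover have "f r - c * g r \<le> Inf (S r)" using a(1) elim by (intro cInf_greatest) auto
    moreover have "c * g r \<le> c * \<bar>g r\<bar>" using \<open>0 < c\<close> by (simp add: mult_left_mono)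
    ultimately show ?case using a(2) by (simp add: abs_le_iff)
  qed
qed

lemma Inf_tampered_kl_asymptotics:
  fixes P :: "'a::finite \<Rightarrow> real" and A :: "('a \<Rightarrow> real) \<Rightarrow> bool"
    and d :: "('a \<Rightarrow> real) \<Rightarrow> ('a \<Rightarrow> real) \<Rightarrow> ereal"
  assumes P: "P \<in> distrs" "\<And>x. 0 < P x"
    and d: "div_bounds_chi2 \<alpha> d" "chi2_bounds_div \<alpha> d" and "0 < \<alpha>" "0 \<le> V"
    and above: "\<And>w. w \<in> distrs \<Longrightarrow> A w \<Longrightarrow> E \<le> kl w P"
    and near: "\<And>\<eta>. 0 < \<eta> \<Longrightarrow> \<exists>\<delta>>0. \<forall>w. w \<in> distrs \<and> A w \<and> kl w P < E + \<delta> \<longrightarrow> var_log w P \<le> V + \<eta>"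
    and witness: "\<And>\<eta>. 0 < \<eta> \<Longrightarrow> \<exists>w. w \<in> distrs \<and> A w \<and> kl w P \<le> E \<and> V - \<eta> \<le> var_log w P"
  shows "(\<lambda>r. Inf {kl Q P | Q Qh. Qh \<in> distrs \<and> Q \<in> distrs \<and> A Qh \<and> d Q Qh \<le> ereal r}
           - (E - sqrt (r * (2 / \<alpha> * V)))) \<in> o[at_right 0](\<lambda>r. sqrt r)"
proof (rule Inf_minus_in_smallo)
  fix c :: real assume "0 < c"
  show "\<forall>\<^sub>F r in at_right 0. \<forall>a\<in>{kl Q P | Q Qh. Qh \<in> distrs \<and> Q \<in> distrs \<and> A Qh \<and> d Q Qh \<le> ereal r}.
      E - sqrt (r * (2 / \<alpha> * V)) - c * sqrt r \<le> a"
    using tampered_kl_lower_bound[where P = P, OF P d(1) \<open>0 < \<alpha>\<close> \<open>0 \<le> V\<close> above near \<open>0 < c\<close>]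
    by (rule eventually_mono) auto
  show "\<forall>\<^sub>F r in at_right 0. \<exists>a\<in>{kl Q P | Q Qh. Qh \<in> distrs \<and> Q \<in> distrs \<and> A Qh \<and> d Q Qh \<le> ereal r}.
      a \<le> E - sqrt (r * (2 / \<alpha> * V)) + c * sqrt r"
    using tampered_kl_upper_bound[where P = P, OF P(2) d(2) \<open>0 < \<alpha>\<close> \<open>0 \<le> V\<close> witness \<open>0 < c\<close>]
    by (rule eventually_mono) auto
qed

lemma E0_hat_asymptotics:
  fixes P0 Q :: "'a::finite \<Rightarrow> real" and d :: "('a \<Rightarrow> real) \<Rightarrow> ('a \<Rightarrow> real) \<Rightarrow> ereal"
  assumes P0: "P0 \<in> distrs" "\<And>x. 0 < P0 x" and "0 < \<gamma>" and Q: "Q \<in> distrs" "kl Q P0 = \<gamma>"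
    and d: "div_bounds_chi2 \<alpha> d" "chi2_bounds_div \<alpha> d" and "0 < \<alpha>"
  shows "(\<lambda>r. E0_hat P0 \<gamma> d r - (\<gamma> - sqrt (r * theta0 \<alpha> P0 \<gamma>))) \<in> o[at_right 0](\<lambda>r. sqrt r)"
proof -
  define S where "S = {var_log Qh P0 | Qh. Qh \<in> distrs \<and> kl Qh P0 = \<gamma>}"
  have "var_log Q P0 \<in> S" "bdd_above S" using Q bdd_above_var_log[of P0] P0(2) by (auto simp: S_def)
  then have "0 \<le> Sup S" using var_log_nonneg[OF Q(1)] cSup_upper order_trans by blast
  have "(\<lambda>r. E0_hat P0 \<gamma> d r - (\<gamma> - sqrt (r * (2 / \<alpha> * Sup S)))) \<in> o[at_right 0](\<lambda>r. sqrt r)"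
    unfolding E0_hat_def
  proof (rule Inf_tampered_kl_asymptotics[where A = "\<lambda>Qh. \<gamma> \<le> kl Qh P0", OF P0 d \<open>0 < \<alpha>\<close> \<open>0 \<le> Sup S\<close>])
    show "\<exists>\<delta>>0. \<forall>w. w \<in> distrs \<and> \<gamma> \<le> kl w P0 \<and> kl w P0 < \<gamma> + \<delta> \<longrightarrow> var_log w P0 \<le> Sup S + \<eta>"
      if "0 < \<eta>" for \<eta>
      using var_log_near_level_set[of P0 \<gamma> \<eta>] P0 \<open>0 < \<gamma>\<close> that by (simp add: S_def)
    show "\<exists>w. w \<in> distrs \<and> \<gamma> \<le> kl w P0 \<and> kl w P0 \<le> \<gamma> \<and> Sup S - \<eta> \<le> var_log w P0"
      if "0 < \<eta>" for \<eta>
    proof -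
      have "S \<noteq> {}" "Sup S - \<eta> < Sup S" using \<open>var_log Q P0 \<in> S\<close> that by auto
      then obtain v where "v \<in> S" "Sup S - \<eta> < v" by (meson less_cSupE)
      then show ?thesis by (auto simp: S_def)
    qed
  qed auto
  then show ?thesis by (simp add: theta0_def S_def)
qed

lemma E1_hat_asymptotics:
  fixes P0 P1 :: "'a::finite \<Rightarrow> real" and d :: "('a \<Rightarrow> real) \<Rightarrow> ('a \<Rightarrow> real) \<Rightarrow> ereal"
  assumes P1: "P1 \<in> distrs" and pos: "\<And>x. 0 < P0 x" "\<And>x. 0 < P1 x"
    and \<mu>: "0 \<le> \<mu>" "kl (tilt P0 P1 \<mu>) P0 = \<gamma>"
    and d: "div_bounds_chi2 \<alpha> d" "chi2_bounds_div \<alpha> d" and "0 < \<alpha>"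
  shows "(\<lambda>r. E1_hat P0 P1 \<gamma> d r - (kl (tilt P0 P1 \<mu>) P1 - sqrt (r * theta1 \<alpha> P0 P1 \<mu>)))
           \<in> o[at_right 0](\<lambda>r. sqrt r)"
  unfolding E1_hat_def theta1_def
proof (rule Inf_tampered_kl_asymptotics[where A = "\<lambda>Qh. kl Qh P0 \<le> \<gamma>", OF P1 pos(2) d \<open>0 < \<alpha>\<close>])
  define Q where "Q = tilt P0 P1 \<mu>"
  have Q: "Q \<in> distrs" "\<And>x. 0 < Q x"
    using tilt_distrs[of P0 P1] tilt_pos[of P0 P1] pos by (auto simp: Q_def)
  show "0 \<le> var_log (tilt P0 P1 \<mu>) P1" using var_log_nonneg[OF Q(1)] by (simp add: Q_def)
  show "kl (tilt P0 P1 \<mu>) P1 \<le> kl w P1" if "w \<in> distrs" "kl w P0 \<le> \<gamma>" for w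
    using kl_ge_kl_tilt_plus[of P0 P1 \<mu> w] kl_nonneg[OF that(1) Q(1) Q(2)] pos \<mu> that
    by (simp add: Q_def)
  show "\<exists>\<delta>>0. \<forall>w. w \<in> distrs \<and> kl w P0 \<le> \<gamma> \<and> kl w P1 < kl (tilt P0 P1 \<mu>) P1 + \<delta> \<longrightarrow>
      var_log w P1 \<le> var_log (tilt P0 P1 \<mu>) P1 + \<eta>" if "0 < \<eta>" for \<eta>
    using var_log_near_tilt[of P0 P1 \<mu> \<eta>] pos P1 \<mu> that by simp
  show "\<exists>w. w \<in> distrs \<and> kl w P0 \<le> \<gamma> \<and> kl w P1 \<le> kl (tilt P0 P1 \<mu>) P1
      \<and> var_log (tilt P0 P1 \<mu>) P1 - \<eta> \<le> var_log w P1" if "0 < \<eta>" for \<eta>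
    using Q(1) \<mu>(2) that by (intro exI[of _ Q]) (auto simp: Q_def)
qed

theorem theorem10:
  fixes P0 P1 :: "'a::finite \<Rightarrow> real"
    and \<gamma> \<mu> \<alpha> :: real
    and d :: "('a \<Rightarrow> real) \<Rightarrow> ('a \<Rightarrow> real) \<Rightarrow> ereal"
  assumes P0: "P0 \<in> distrs" and P1: "P1 \<in> distrs"
    and P0_pos: "\<forall>x. 0 < P0 x" and P1_pos: "\<forall>x. 0 < P1 x"
    and gamma: "0 < \<gamma>" "\<gamma> < kl P1 P0"
    and mu: "0 \<le> \<mu>" "kl (tilt P0 P1 \<mu>) P0 = \<gamma>"
    and dist: "(0 < \<alpha> \<and> d = renyi_div \<alpha>) \<or>
               (\<exists>f f' f''. fgen f f' f'' \<and> \<alpha> = f'' 1 \<and> 0 < \<alpha> \<and> d = fdiv f)"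
  shows "(\<lambda>r. E0_hat P0 \<gamma> d r - (\<gamma> - sqrt (r * theta0 \<alpha> P0 \<gamma>)))
            \<in> o[at_right 0](\<lambda>r. sqrt r)
       \<and> (\<lambda>r. E1_hat P0 P1 \<gamma> d r - (kl (tilt P0 P1 \<mu>) P1 - sqrt (r * theta1 \<alpha> P0 P1 \<mu>)))
            \<in> o[at_right 0](\<lambda>r. sqrt r)"
proof -
  have \<alpha>: "0 < \<alpha>" and d: "div_bounds_chi2 \<alpha> d" "chi2_bounds_div \<alpha> d"
    using dist renyi_div_chi2_bounds fdiv_chi2_bounds by blast+
  have pos: "\<And>x. 0 < P0 x" "\<And>x. 0 < P1 x" using P0_pos P1_pos by auto
  have "tilt P0 P1 \<mu> \<in> distrs" using tilt_distrs[of P0 P1] pos by blast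
  then show ?thesis
    using E0_hat_asymptotics[OF P0 pos(1) gamma(1) _ mu(2) d \<alpha>]
      E1_hat_asymptotics[OF P1 pos mu d \<alpha>] by blast
qed

end
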